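(* Let $0<r_1<r_2$, $N\ge 2$, and let $h:[r_1,r_2]\times[0,\infty)\to[0,\infty)$ be continuous with $h(t,0)=0$. Let $q$ and $f$ be defined from $h$ as in the context, and consider, for $\lambda>0$, the boundary value problem $$u''(t)+\lambda q(t)f(t,u(t))=0,\quad t\in(0,1),\qquad u(0)=0=u(1). \qquad (P_\lambda)$$ Assume there exist a continuous function $b:[0,1]\to[0,\infty)$, not identically zero, and positive constants $c,\delta,R$ with $c>1$ and $0<\delta<R$ such that (i) $f(t,u)\le b(t)u$ for all $u\in(0,\delta)$, uniformly in $t\in(0,1)$, and (ii) $f(t,u)\ge c\,b(t)u$ for all $u\ge R$, uniformly in $t\in(0,1)$. Then $(P_\lambda)$ has a positive solution for every $\lambda$ with $\frac{\lambda_{1,qb}}{c}<\lambda<\lambda_{1,qb}$.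
   Context: The problem $(P_\lambda)$ arises from radial solutions of $-\Delta v=\lambda h(|x|,v)$ in the annulus $\{x\in\mathbb{R}^N: r_1<|x|<r_2\}$, $v=0$ on the boundary. The functions $q$ and $f$ are defined as follows. If $N=2$: $q(t)=\left[r_2\left(\frac{r_1}{r_2}\right)^t\log\frac{r_2}{r_1}\right]^2$ and $f(t,u)=h\!\left(r_2\left(\frac{r_1}{r_2}\right)^t,u\right)$. If $N\ge 3$: with $A=\frac{(r_1r_2)^{N-2}}{r_2^{N-2}-r_1^{N-2}}$ and $B=\frac{r_2^{N-2}}{r_2^{N-2}-r_1^{N-2}}$, $q(t)=(N-2)^{-2}\frac{A^{2/(N-2)}}{(B-t)^{2(N-1)/(N-2)}}$ and $f(t,u)=h\!\left(\left(\frac{A}{B-t}\right)^{1/(N-2)},u\right)$. In either case $q$ is continuous on $[0,1]$ and bounded between positive constants there. A positive solution of $(P_\lambda)$ is a function $u\in C([0,1])\cap C^2(0,1)$ satisfying $(P_\lambda)$ with $u(t)>0$ for $t\in(0,1)$. For a continuous $m:[0,1]\to[0,\infty)$ that is positive on a set of positive measure, $\lambda_{1,m}$ denotes the first (smallest) eigenvalue of $-u''=\lambda m(t)u$ on $(0,1)$, $u(0)=u(1)=0$; its eigenfunction $\phi_{1,m}$ satisfies $\phi_{1,m}>0$ on $(0,1)$. Here $\lambda_{1,qb}$ is this eigenvalue with $m=qb$. *)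

theory Defs
  imports "HOL-Analysis.Analysis"
begin

text \<open>Change of variables t \<mapsto> radius, for the annulus r1 < |x| < r2 in R^N.\<close>
definition radius_of :: "nat \<Rightarrow> real \<Rightarrow> real \<Rightarrow> real \<Rightarrow> real" where
  "radius_of N r1 r2 t =
     (if N = 2 then r2 * (r1 / r2) powr t
      else (let A = (r1 * r2) ^ (N - 2) / (r2 ^ (N - 2) - r1 ^ (N - 2));
                B = r2 ^ (N - 2) / (r2 ^ (N - 2) - r1 ^ (N - 2))
            in (A / (B - t)) powr (1 / real (N - 2))))"

definition qfun :: "nat \<Rightarrow> real \<Rightarrow> real \<Rightarrow> real \<Rightarrow> real" where
  "qfun N r1 r2 t =
     (if N = 2 then (r2 * (r1 / r2) powr t * ln (r2 / r1))\<^sup>2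
      else (let A = (r1 * r2) ^ (N - 2) / (r2 ^ (N - 2) - r1 ^ (N - 2));
                B = r2 ^ (N - 2) / (r2 ^ (N - 2) - r1 ^ (N - 2))
            in (real (N - 2)) powr (-2) * A powr (2 / real (N - 2))
               / (B - t) powr (2 * real (N - 1) / real (N - 2))))"

definition ffun :: "nat \<Rightarrow> real \<Rightarrow> real \<Rightarrow> (real \<Rightarrow> real \<Rightarrow> real) \<Rightarrow> real \<Rightarrow> real \<Rightarrow> real" where
  "ffun N r1 r2 h t u = h (radius_of N r1 r2 t) u"

definition C2_on_open01 :: "(real \<Rightarrow> real) \<Rightarrow> (real \<Rightarrow> real) \<Rightarrow> (real \<Rightarrow> real) \<Rightarrow> bool" where
  "C2_on_open01 u u' u'' \<longleftrightarrow>
     (\<forall>t\<in>{0<..<1}. (u has_real_derivative u' t) (at t) \<and> (u' has_real_derivative u'' t) (at t))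
     \<and> continuous_on {0<..<1} u''"

definition is_dirichlet_eigenvalue :: "(real \<Rightarrow> real) \<Rightarrow> real \<Rightarrow> bool" where
  "is_dirichlet_eigenvalue m lam \<longleftrightarrow>
     (\<exists>u u' u''. continuous_on {0..1} u \<and> C2_on_open01 u u' u''
        \<and> (\<exists>t\<in>{0..1}. u t \<noteq> 0)
        \<and> (\<forall>t\<in>{0<..<1}. - u'' t = lam * m t * u t)
        \<and> u 0 = 0 \<and> u 1 = 0)"

definition lambda1 :: "(real \<Rightarrow> real) \<Rightarrow> real" where
  "lambda1 m = Inf {lam. is_dirichlet_eigenvalue m lam}"

definition positive_solution ::
  "(real \<Rightarrow> real) \<Rightarrow> (real \<Rightarrow> real \<Rightarrow> real) \<Rightarrow> real \<Rightarrow> (real \<Rightarrow> real) \<Rightarrow> bool" where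
  "positive_solution q f lam u \<longleftrightarrow>
     continuous_on {0..1} u \<and>
     (\<exists>u' u''. C2_on_open01 u u' u'' \<and>
        (\<forall>t\<in>{0<..<1}. u'' t + lam * q t * f t (u t) = 0)) \<and>
     u 0 = 0 \<and> u 1 = 0 \<and> (\<forall>t\<in>{0<..<1}. u t > 0)"

end

theory Submission
  imports Defs "HOL-Complex_Analysis.Great_Picard"
begin

text \<open>Substituting the radial variable turns the problem into u'' + F(t,u) = 0 on [0,1],
  u(0) = u(1) = 0, with F = lam q f lying below lam_1 m u (m = q b) for small u and above
  c lam m u > lam_1 m u for large u.
  The principal eigenpair of -w'' = mu m w is constructed by shooting: v_mu solves
  v'' = -mu m v, v(0) = 0, v'(0) = 1, lam_1 is the least mu for which v_mu vanishes in (0,1],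
  a Sturm comparison with a sine shows that such mu exist, and a Wronskian argument shows that
  no eigenvalue lies below lam_1.
  For a Lipschitz nonlinearity G, the solution U_s of u'' = -G(t,u), u(0) = 0, u'(0) = s, depends
  continuously on s. Testing the equation against the eigenfunction phi shows U_s(1) > 0 for small s
  (where G lies below the eigenvalue line) and bounds every solution with U_s(1) >= 0
  (where G lies above it), which forces U_s(1) < 0 for large s; the intermediate value theorem
  gives a positive solution. A continuous F is approximated by Lipschitz nonlinearities that
  interpolate it piecewise linearly in u, and the Arzela-Ascoli theorem yields a solution in the limit.\<close>

section \<open>The initial value problem u'' = -G(t,u), u(0) = 0, u'(0) = s\<close>

lemma integrable_on_subinterval_01:
  fixes g :: "real \<Rightarrow> real"
  assumes "continuous_on {0..1} g" "0 \<le> a" "b \<le> 1"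
  shows "g integrable_on {a..b}"
  by (rule integrable_continuous_real, rule continuous_on_subset[OF assms(1)]) (use assms in auto)

lemma at_within_01_eq_at: "t \<in> {0<..<1} \<Longrightarrow> at t within {0..1} = at (t::real)"
  by (intro at_within_Icc_at) auto

lemma ge_on_01_if_ge_on_open_01:
  fixes h :: "real \<Rightarrow> real"
  assumes "continuous_on {0..1} h" "\<And>t. t \<in> {0<..<1} \<Longrightarrow> a \<le> h t" "x \<in> {0..1}"
  shows "a \<le> h x"
  by (rule continuous_ge_on_closure[of "{0<..<1}"]) (use assms in auto)

lemma continuous_on_compose_01:
  fixes G :: "real \<Rightarrow> real \<Rightarrow> real"
  assumes G: "continuous_on ({0..1} \<times> X) (\<lambda>(t,x). G t x)"
    and u: "continuous_on {0..1} u" "\<And>t. t \<in> {0..1} \<Longrightarrow> u t \<in> X"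
  shows "continuous_on {0..1} (\<lambda>t. G t (u t))"
proof -
  have "continuous_on {0..1} ((\<lambda>(t,x). G t x) \<circ> (\<lambda>t. (t, u t)))"
    by (rule continuous_on_compose) (auto intro!: continuous_intros u continuous_on_subset[OF G])
  then show ?thesis by (simp add: o_def)
qed

lemma mvt_within_Icc:
  fixes f f' :: "real \<Rightarrow> real"
  assumes d: "\<And>t. t \<in> {l..r} \<Longrightarrow> (f has_real_derivative f' t) (at t within {l..r})"
    and ab: "l \<le> a" "a < b" "b \<le> r"
  shows "\<exists>x\<in>{a<..<b}. f b - f a = f' x * (b - a)"
proof -
  have "\<exists>x\<in>{a<..<b}. f b - f a = (\<lambda>h. f' x * h) (b - a)"
  proof (rule mvt_simple[OF ab(2)])
    fix x assume "a \<le> x" "x \<le> b"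
    then have "(f has_real_derivative f' x) (at x within {a..b})"
      using ab by (intro has_field_derivative_subset[OF d]) auto
    then show "(f has_derivative (\<lambda>h. f' x * h)) (at x within {a..b})"
      by (simp add: has_field_derivative_def)
  qed
  then show ?thesis by simp
qed

lemma nonincreasing_within_Icc:
  fixes f f' :: "real \<Rightarrow> real"
  assumes d: "\<And>t. t \<in> {l..r} \<Longrightarrow> (f has_real_derivative f' t) (at t within {l..r})"
    and np: "\<And>t. t \<in> {a..b} \<Longrightarrow> f' t \<le> 0"
    and ab: "l \<le> a" "a \<le> b" "b \<le> r"
  shows "f b \<le> f a"
proof (cases "a = b")
  case False
  then obtain x where x: "x \<in> {a<..<b}" "f b - f a = f' x * (b - a)"
    using mvt_within_Icc[OF d, of a b] ab by auto
  have "f' x * (b - a) \<le> 0" using np[of x] x ab by (intro mult_nonpos_nonneg) auto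
  then show ?thesis using x by simp
qed simp

lemma nondecreasing_within_Icc:
  fixes f f' :: "real \<Rightarrow> real"
  assumes d: "\<And>t. t \<in> {l..r} \<Longrightarrow> (f has_real_derivative f' t) (at t within {l..r})"
    and np: "\<And>t. t \<in> {a..b} \<Longrightarrow> f' t \<ge> 0"
    and ab: "l \<le> a" "a \<le> b" "b \<le> r"
  shows "f a \<le> f b"
proof -
  have "(\<lambda>t. - f t) b \<le> (\<lambda>t. - f t) a"
    by (rule nonincreasing_within_Icc[where f'="\<lambda>t. - f' t"])
      (use assms in \<open>auto intro: derivative_intros\<close>)
  then show ?thesis by simp
qed

lemma concave_within_Icc:
  fixes f f' :: "real \<Rightarrow> real"
  assumes d: "\<And>t. t \<in> {l..r} \<Longrightarrow> (f has_real_derivative f' t) (at t within {l..r})"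
    and dec: "\<And>x y. l \<le> x \<Longrightarrow> x \<le> y \<Longrightarrow> y \<le> r \<Longrightarrow> f' y \<le> f' x"
    and ab: "l \<le> a" "a < x" "x < b" "b \<le> r"
  shows "(b - x) * f a + (x - a) * f b \<le> (b - a) * f x"
proof -
  obtain y1 where y1: "y1 \<in> {a<..<x}" "f x - f a = f' y1 * (x - a)"
    using mvt_within_Icc[OF d, of a x] ab by auto
  obtain y2 where y2: "y2 \<in> {x<..<b}" "f b - f x = f' y2 * (b - x)"
    using mvt_within_Icc[OF d, of x b] ab by auto
  have "f' y2 \<le> f' y1" using y1 y2 ab by (intro dec) auto
  then have "(f b - f x) * (x - a) \<le> (f x - f a) * (b - x)"
    using y1 y2 ab by (simp add: mult_right_mono mult_left_mono mult.assoc[symmetric])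
  then show ?thesis by (simp add: algebra_simps)
qed

lemma lagrange_identity_has_integral:
  fixes u du g p dp k :: "real \<Rightarrow> real"
  assumes du: "\<And>t. t \<in> {l..r} \<Longrightarrow> (u has_real_derivative du t) (at t within {l..r})"
    and ddu: "\<And>t. t \<in> {l..r} \<Longrightarrow> (du has_real_derivative - g t) (at t within {l..r})"
    and dp: "\<And>t. t \<in> {l..r} \<Longrightarrow> (p has_real_derivative dp t) (at t within {l..r})"
    and ddp: "\<And>t. t \<in> {l..r} \<Longrightarrow> (dp has_real_derivative - k t) (at t within {l..r})"
    and ab: "l \<le> a" "a \<le> b" "b \<le> r"
  shows "((\<lambda>t. u t * k t - g t * p t) has_integral
           ((du b * p b - u b * dp b) - (du a * p a - u a * dp a))) {a..b}"
proof (rule fundamental_theorem_of_calculus[OF ab(2)])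
  fix t assume t: "t \<in> {a..b}"
  then have t': "t \<in> {l..r}" using ab by auto
  have "((\<lambda>t. du t * p t - u t * dp t) has_real_derivative u t * k t - g t * p t) (at t within {l..r})"
    using DERIV_diff[OF DERIV_mult'[OF ddu[OF t'] dp[OF t']] DERIV_mult'[OF du[OF t'] ddp[OF t']]]
    by (simp add: algebra_simps)
  then have "((\<lambda>t. du t * p t - u t * dp t) has_real_derivative u t * k t - g t * p t) (at t within {a..b})"
    by (rule has_field_derivative_subset) (use ab in auto)
  then show "((\<lambda>t. du t * p t - u t * dp t) has_vector_derivative u t * k t - g t * p t) (at t within {a..b})"
    by (simp add: has_real_derivative_iff_has_vector_derivative)
qed

text \<open>Cauchy's formula: \<open>repeated_integral g\<close> solves w'' = g, w(0) = w'(0) = 0.\<close>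
definition repeated_integral :: "(real \<Rightarrow> real) \<Rightarrow> real \<Rightarrow> real" where
  "repeated_integral g x = integral {0..x} (\<lambda>\<tau>. (x - \<tau>) * g \<tau>)"

lemma repeated_integral_0 [simp]: "repeated_integral g 0 = 0"
  unfolding repeated_integral_def by simp

lemma repeated_integral_eq:
  assumes g: "continuous_on {0..1} g" and x: "x \<in> {0..1}"
  shows "repeated_integral g x = x * integral {0..x} g - integral {0..x} (\<lambda>\<tau>. \<tau> * g \<tau>)"
proof -
  have "continuous_on {0..1} (\<lambda>\<tau>. \<tau> * g \<tau>)" by (intro continuous_intros g)
  then have "(\<lambda>\<tau>. x * g \<tau>) integrable_on {0..x}" "(\<lambda>\<tau>. \<tau> * g \<tau>) integrable_on {0..x}"
    using integrable_on_subinterval_01[OF g, of 0 x] integrable_on_subinterval_01[of _ 0 x] x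
    by (auto intro: integrable_on_mult_right)
  from integral_diff[OF this] show ?thesis
    unfolding repeated_integral_def by (simp add: algebra_simps)
qed

lemma repeated_integral_has_derivative:
  assumes g: "continuous_on {0..1} g" and x: "x \<in> {0..1}"
  shows "(repeated_integral g has_real_derivative integral {0..x} g) (at x within {0..1})"
proof -
  have "continuous_on {0..1} (\<lambda>\<tau>. \<tau> * g \<tau>)" by (intro continuous_intros g)
  from integral_has_real_derivative[OF this x] integral_has_real_derivative[OF g x]
  have "((\<lambda>x. x * integral {0..x} g - integral {0..x} (\<lambda>\<tau>. \<tau> * g \<tau>))
      has_real_derivative integral {0..x} g) (at x within {0..1})"
    by (auto intro!: derivative_eq_intros)
  then show ?thesis
    by (rule has_field_derivative_transform_within[where d=1]) (use x repeated_integral_eq[OF g] in auto)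
qed

lemma continuous_on_repeated_integral:
  assumes "continuous_on {0..1} g"
  shows "continuous_on {0..1} (repeated_integral g)"
  unfolding continuous_on_eq_continuous_within
  using repeated_integral_has_derivative[OF assms] DERIV_continuous by blast

lemma repeated_integral_diff:
  fixes g1 g2 :: "real \<Rightarrow> real"
  assumes "continuous_on {0..1} g1" "continuous_on {0..1} g2" "x \<in> {0..1}"
  shows "repeated_integral (\<lambda>\<tau>. g1 \<tau> - g2 \<tau>) x = repeated_integral g1 x - repeated_integral g2 x"
proof -
  have "continuous_on {0..1} (\<lambda>\<tau>. (x - \<tau>) * g1 \<tau>)" "continuous_on {0..1} (\<lambda>\<tau>. (x - \<tau>) * g2 \<tau>)"
    by (intro continuous_intros assms)+
  from this[THEN integrable_on_subinterval_01, of 0 x] assms(3) show ?thesis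
    unfolding repeated_integral_def by (simp add: algebra_simps integral_diff[symmetric])
qed

lemma abs_repeated_integral_le_exp:
  fixes g :: "real \<Rightarrow> real"
  assumes g: "continuous_on {0..1} g" and x: "x \<in> {0..1}" and \<gamma>: "\<gamma> > 0"
    and bound: "\<And>\<tau>. \<tau> \<in> {0..x} \<Longrightarrow> \<bar>g \<tau>\<bar> \<le> K * exp (\<gamma> * \<tau>)"
  shows "\<bar>repeated_integral g x\<bar> \<le> K / \<gamma>\<^sup>2 * exp (\<gamma> * x)"
proof -
  define F where "F \<tau> = (x - \<tau>) * exp (\<gamma> * \<tau>) / \<gamma> + exp (\<gamma> * \<tau>) / \<gamma>\<^sup>2" for \<tau>
  have "(F has_real_derivative (x - \<tau>) * exp (\<gamma> * \<tau>)) (at \<tau> within {0..x})" for \<tau>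
    unfolding F_def using \<gamma> by (auto intro!: derivative_eq_intros simp: field_simps power2_eq_square)
  then have "((\<lambda>\<tau>. (x - \<tau>) * exp (\<gamma> * \<tau>)) has_integral (F x - F 0)) {0..x}"
    using x by (intro fundamental_theorem_of_calculus)
      (auto simp: has_real_derivative_iff_has_vector_derivative[symmetric])
  moreover have "F x - F 0 \<le> exp (\<gamma> * x) / \<gamma>\<^sup>2"
  proof -
    have "F x - F 0 = exp (\<gamma> * x) / \<gamma>\<^sup>2 - x / \<gamma> - 1 / \<gamma>\<^sup>2" by (simp add: F_def)
    moreover have "0 \<le> x / \<gamma>" "0 \<le> 1 / \<gamma>\<^sup>2" using x \<gamma> by auto
    ultimately show ?thesis by linarith
  qed
  ultimately have kernel: "integral {0..x} (\<lambda>\<tau>. (x - \<tau>) * exp (\<gamma> * \<tau>)) \<le> exp (\<gamma> * x) / \<gamma>\<^sup>2"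
    by (simp add: integral_unique)
  have K: "0 \<le> K" using bound[of 0] x by auto
  have "continuous_on {0..1} (\<lambda>\<tau>. (x - \<tau>) * g \<tau>)" "continuous_on {0..1} (\<lambda>\<tau>. (x - \<tau>) * exp (\<gamma> * \<tau>))"
    by (intro continuous_intros g)+
  note int = this[THEN integrable_on_subinterval_01, of 0 x]
  have "\<bar>repeated_integral g x\<bar> \<le> integral {0..x} (\<lambda>\<tau>. K * ((x - \<tau>) * exp (\<gamma> * \<tau>)))"
    unfolding repeated_integral_def real_norm_def[symmetric]
  proof (rule integral_norm_bound_integral)
    fix \<tau> assume t: "\<tau> \<in> {0..x}"
    have "norm ((x - \<tau>) * g \<tau>) = (x - \<tau>) * \<bar>g \<tau>\<bar>" using t by (simp add: abs_mult)
    also have "\<dots> \<le> (x - \<tau>) * (K * exp (\<gamma> * \<tau>))" using t bound[OF t] by (intro mult_left_mono) auto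
    finally show "norm ((x - \<tau>) * g \<tau>) \<le> K * ((x - \<tau>) * exp (\<gamma> * \<tau>))" by (simp add: algebra_simps)
  qed (use int x in \<open>auto intro: integrable_on_mult_right\<close>)
  also have "\<dots> = K * integral {0..x} (\<lambda>\<tau>. (x - \<tau>) * exp (\<gamma> * \<tau>))" by simp
  also have "\<dots> \<le> K * (exp (\<gamma> * x) / \<gamma>\<^sup>2)" using kernel K by (rule mult_left_mono)
  also have "\<dots> = K / \<gamma>\<^sup>2 * exp (\<gamma> * x)" by simp
  finally show ?thesis by simp
qed

lemma abs_repeated_integral_le_square:
  fixes g :: "real \<Rightarrow> real"
  assumes g: "continuous_on {0..1} g" and x: "x \<in> {0..1}"
    and bound: "\<And>\<tau>. \<tau> \<in> {0..x} \<Longrightarrow> \<bar>g \<tau>\<bar> \<le> D"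
  shows "\<bar>repeated_integral g x\<bar> \<le> D * x\<^sup>2"
proof -
  have "continuous_on {0..1} (\<lambda>\<tau>. (x - \<tau>) * g \<tau>)" by (intro continuous_intros g)
  note int = integrable_on_subinterval_01[OF this, of 0 x]
  have "\<bar>repeated_integral g x\<bar> \<le> integral {0..x} (\<lambda>\<tau>. x * D)"
    unfolding repeated_integral_def real_norm_def[symmetric]
  proof (rule integral_norm_bound_integral)
    fix \<tau> assume t: "\<tau> \<in> {0..x}"
    have "norm ((x - \<tau>) * g \<tau>) = (x - \<tau>) * \<bar>g \<tau>\<bar>" using t by (simp add: abs_mult)
    also have "\<dots> \<le> x * D" using t x bound[OF t] by (intro mult_mono) auto
    finally show "norm ((x - \<tau>) * g \<tau>) \<le> x * D" .
  qed (use int x in auto)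
  also have "\<dots> = D * x\<^sup>2" using x by (simp add: power2_eq_square)
  finally show ?thesis .
qed

lemma abs_repeated_integral_le:
  fixes g :: "real \<Rightarrow> real"
  assumes g: "continuous_on {0..1} g" and x: "x \<in> {0..1}"
    and bound: "\<And>\<tau>. \<tau> \<in> {0..x} \<Longrightarrow> \<bar>g \<tau>\<bar> \<le> D"
  shows "\<bar>repeated_integral g x\<bar> \<le> D"
proof -
  have "0 \<le> D" using bound[of 0] x by auto
  moreover have "x\<^sup>2 \<le> 1" using x by (simp add: power_le_one)
  ultimately have "D * x\<^sup>2 \<le> D" by (simp add: mult_left_le)
  with abs_repeated_integral_le_square[OF assms] show ?thesis by linarith
qed

text \<open>\<open>ivp_solution G s u\<close>: u solves u'' = -G(t,u) on [0,1] with u(0) = 0 and u'(0) = s;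
  \<open>ivp_slope G s u\<close> is then u'.\<close>
definition ivp_solution :: "(real \<Rightarrow> real \<Rightarrow> real) \<Rightarrow> real \<Rightarrow> (real \<Rightarrow> real) \<Rightarrow> bool" where
  "ivp_solution G s u \<longleftrightarrow> continuous_on {0..1} u \<and>
     (\<forall>t\<in>{0..1}. u t = s * t - repeated_integral (\<lambda>\<tau>. G \<tau> (u \<tau>)) t)"

definition ivp_slope :: "(real \<Rightarrow> real \<Rightarrow> real) \<Rightarrow> real \<Rightarrow> (real \<Rightarrow> real) \<Rightarrow> real \<Rightarrow> real" where
  "ivp_slope G s u t = s - integral {0..t} (\<lambda>\<tau>. G \<tau> (u \<tau>))"

lemma ivp_solution_0: "ivp_solution G s u \<Longrightarrow> u 0 = 0"
  unfolding ivp_solution_def by auto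

lemma ivp_slope_0 [simp]: "ivp_slope G s u 0 = s"
  unfolding ivp_slope_def by simp

lemma ivp_solution_continuous_rhs:
  assumes "continuous_on ({0..1} \<times> UNIV) (\<lambda>(t,x). G t x)" "ivp_solution G s u"
  shows "continuous_on {0..1} (\<lambda>\<tau>. G \<tau> (u \<tau>))"
  by (rule continuous_on_compose_01[OF assms(1)]) (use assms(2) in \<open>auto simp: ivp_solution_def\<close>)

lemma ivp_solution_has_derivative:
  fixes G :: "real \<Rightarrow> real \<Rightarrow> real"
  assumes G: "continuous_on ({0..1} \<times> UNIV) (\<lambda>(t,x). G t x)" and u: "ivp_solution G s u"
    and t: "t \<in> {0..1}"
  shows "(u has_real_derivative ivp_slope G s u t) (at t within {0..1})"
    and "(ivp_slope G s u has_real_derivative - G t (u t)) (at t within {0..1})"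
proof -
  note g = ivp_solution_continuous_rhs[OF G u]
  have "((\<lambda>t. s * t - repeated_integral (\<lambda>\<tau>. G \<tau> (u \<tau>)) t) has_real_derivative ivp_slope G s u t)
      (at t within {0..1})"
    unfolding ivp_slope_def
    by (rule derivative_eq_intros refl repeated_integral_has_derivative[OF g t])+ simp
  then show "(u has_real_derivative ivp_slope G s u t) (at t within {0..1})"
    by (rule has_field_derivative_transform_within[where d=1])
      (use t u in \<open>auto simp: ivp_solution_def\<close>)
  show "(ivp_slope G s u has_real_derivative - G t (u t)) (at t within {0..1})"
    unfolding ivp_slope_def using integral_has_real_derivative[OF g t]
    by (auto intro!: derivative_eq_intros)
qed

lemma ivp_solution_C2:
  assumes G: "continuous_on ({0..1} \<times> UNIV) (\<lambda>(t,x). G t x)" and u: "ivp_solution G s u"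
  shows "C2_on_open01 u (ivp_slope G s u) (\<lambda>t. - G t (u t))"
  unfolding C2_on_open01_def
proof (intro conjI ballI)
  fix t :: real assume t: "t \<in> {0<..<1}"
  then have "t \<in> {0..1}" by auto
  from ivp_solution_has_derivative[OF G u this] show
    "(u has_real_derivative ivp_slope G s u t) (at t)"
    "(ivp_slope G s u has_real_derivative - G t (u t)) (at t)"
    unfolding at_within_01_eq_at[OF t] by auto
next
  show "continuous_on {0<..<1} (\<lambda>t. - G t (u t))"
    by (rule continuous_on_subset[of "{0..1}"]) (auto intro!: continuous_intros ivp_solution_continuous_rhs[OF G u])
qed

lemma ivp_solution_pos_inside:
  assumes G: "continuous_on ({0..1} \<times> UNIV) (\<lambda>(t,x). G t x)" and G_nonneg: "\<And>t x. t \<in> {0..1} \<Longrightarrow> 0 \<le> G t x"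
    and u: "ivp_solution G s u" "u 1 = 0" and ts: "ts \<in> {0..1}" "0 < u ts" and t: "0 < t" "t < 1"
  shows "0 < u t"
proof -
  have u0: "u 0 = 0" using ivp_solution_0[OF u(1)] .
  note d = ivp_solution_has_derivative[OF G u(1)]
  have concave: "(b - x) * u a + (x - a) * u b \<le> (b - a) * u x"
    if "0 \<le> a" "a < x" "x < b" "b \<le> 1" for a b x
    by (rule concave_within_Icc[OF d(1) nonincreasing_within_Icc[OF d(2)]]) (use G_nonneg that in auto)
  have ts': "0 < ts" "ts < 1" using ts u u0 by (auto simp: order_le_less)
  consider "t = ts" | "t < ts" | "ts < t" by linarith
  then show ?thesis
  proof cases
    case 2
    have "t * u ts \<le> ts * u t" using concave[of 0 t ts] u0 t 2 ts' by simp
    moreover have "0 < t * u ts" using t ts by simp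
    ultimately have "0 < ts * u t" by linarith
    then show ?thesis using ts' by (simp add: zero_less_mult_iff)
  next
    case 3
    have "(1 - t) * u ts \<le> (1 - ts) * u t" using concave[of ts t 1] u t 3 ts' by simp
    moreover have "0 < (1 - t) * u ts" using t ts by simp
    ultimately have "0 < (1 - ts) * u t" by linarith
    then show ?thesis using ts' by (simp add: zero_less_mult_iff)
  qed (use ts in simp)
qed

text \<open>Existence and stability are proved in the weighted sup norm \<open>sup |v t| / exp (\<gamma> t)\<close>
  with \<open>\<gamma> = L + 1\<close>, in which the integral operator is a contraction with constant \<open>L / \<gamma>\<^sup>2 \<le> 1/2\<close>.\<close>
lemma lipschitz_weight_le_half:
  fixes L :: real
  assumes "0 \<le> L"
  shows "L / (L + 1)\<^sup>2 \<le> 1/2"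
proof -
  have "2 * L \<le> (L + 1)\<^sup>2" by (simp add: power2_eq_square algebra_simps)
  then show ?thesis using assms by (simp add: field_simps)
qed

definition weighted_picard ::
    "(real \<Rightarrow> real \<Rightarrow> real) \<Rightarrow> real \<Rightarrow> real \<Rightarrow> (real \<Rightarrow> real) \<Rightarrow> real \<Rightarrow> real" where
  "weighted_picard G s \<gamma> v x =
     (s * x - repeated_integral (\<lambda>\<tau>. G \<tau> (exp (\<gamma> * \<tau>) * v \<tau>)) x) / exp (\<gamma> * x)"

lemma continuous_on_weighted_picard:
  assumes G: "continuous_on ({0..1} \<times> UNIV) (\<lambda>(t,x). G t x)" and v: "continuous_on {0..1} v"
  shows "continuous_on {0..1} (weighted_picard G s \<gamma> v)"
  unfolding weighted_picard_def
  by (intro continuous_intros continuous_on_repeated_integral continuous_on_compose_01[OF G] v) auto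

lemma weighted_picard_contraction:
  fixes G :: "real \<Rightarrow> real \<Rightarrow> real"
  assumes G: "continuous_on ({0..1} \<times> UNIV) (\<lambda>(t,x). G t x)"
    and lip: "\<And>t x y. t \<in> {0..1} \<Longrightarrow> \<bar>G t x - G t y\<bar> \<le> L * \<bar>x - y\<bar>" and L: "0 \<le> L"
    and v: "continuous_on {0..1} v1" "continuous_on {0..1} v2"
    and d: "\<And>\<tau>. \<tau> \<in> {0..1} \<Longrightarrow> \<bar>v1 \<tau> - v2 \<tau>\<bar> \<le> d" and x: "x \<in> {0..1}"
  shows "\<bar>weighted_picard G s (L + 1) v1 x - weighted_picard G s (L + 1) v2 x\<bar> \<le> d / 2"
proof -
  define \<gamma> where "\<gamma> = L + 1"
  have \<gamma>: "0 < \<gamma>" using L by (simp add: \<gamma>_def)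
  define g1 where "g1 \<tau> = G \<tau> (exp (\<gamma> * \<tau>) * v1 \<tau>)" for \<tau>
  define g2 where "g2 \<tau> = G \<tau> (exp (\<gamma> * \<tau>) * v2 \<tau>)" for \<tau>
  have g: "continuous_on {0..1} g1" "continuous_on {0..1} g2"
    unfolding g1_def g2_def by (intro continuous_on_compose_01[OF G] continuous_intros v; simp)+
  have "\<bar>repeated_integral (\<lambda>\<tau>. g1 \<tau> - g2 \<tau>) x\<bar> \<le> (L * d) / \<gamma>\<^sup>2 * exp (\<gamma> * x)"
  proof (rule abs_repeated_integral_le_exp[OF _ x \<gamma>])
    fix \<tau> assume "\<tau> \<in> {0..x}"
    then have t: "\<tau> \<in> {0..1}" using x by auto
    have "\<bar>g1 \<tau> - g2 \<tau>\<bar> \<le> L * (exp (\<gamma> * \<tau>) * \<bar>v1 \<tau> - v2 \<tau>\<bar>)"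
      using lip[OF t, of "exp (\<gamma> * \<tau>) * v1 \<tau>" "exp (\<gamma> * \<tau>) * v2 \<tau>"]
      unfolding g1_def g2_def by (simp add: abs_mult right_diff_distrib[symmetric])
    also have "\<dots> \<le> L * (exp (\<gamma> * \<tau>) * d)" using L d[OF t] by (intro mult_left_mono) auto
    finally show "\<bar>g1 \<tau> - g2 \<tau>\<bar> \<le> L * d * exp (\<gamma> * \<tau>)" by (simp add: algebra_simps)
  qed (intro continuous_intros g)
  then have "\<bar>repeated_integral g1 x - repeated_integral g2 x\<bar> / exp (\<gamma> * x) \<le> L / \<gamma>\<^sup>2 * d"
    using repeated_integral_diff[OF g x] by (simp add: divide_le_eq field_simps)
  also have "\<dots> \<le> 1/2 * d"
    using lipschitz_weight_le_half[OF L] d[of 0] unfolding \<gamma>_def by (intro mult_right_mono) auto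
  finally show ?thesis
    unfolding weighted_picard_def \<gamma>_def[symmetric] g1_def[symmetric] g2_def[symmetric]
    by (simp add: diff_divide_distrib[symmetric] abs_minus_commute)
qed

lemma ext_cont_01_in_bcontfun:
  fixes f :: "real \<Rightarrow> real"
  assumes "continuous_on {0..1} f"
  shows "ext_cont f 0 1 \<in> bcontfun"
proof -
  have f: "continuous_on (cbox 0 1) f" using assms by simp
  show ?thesis unfolding bcontfun_def ext_cont_def
    using clamp_continuous_on[OF f] clamp_bounded[OF compact_imp_bounded[OF compact_continuous_image[OF f]]]
    by auto
qed

lemma ivp_solution_exists:
  fixes G :: "real \<Rightarrow> real \<Rightarrow> real"
  assumes G: "continuous_on ({0..1} \<times> UNIV) (\<lambda>(t,x). G t x)"
    and lip: "\<And>t x y. t \<in> {0..1} \<Longrightarrow> \<bar>G t x - G t y\<bar> \<le> L * \<bar>x - y\<bar>" and L: "0 \<le> L"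
  shows "\<exists>u. ivp_solution G s u"
proof -
  define P where "P = weighted_picard G s (L + 1)"
  define T where "T v = Bcontfun (ext_cont (P (apply_bcontfun v)) 0 1)" for v
  have T: "apply_bcontfun (T v) t = P (apply_bcontfun v) (clamp 0 1 t)" for v t
    unfolding T_def P_def
    by (simp add: Bcontfun_inverse ext_cont_01_in_bcontfun continuous_on_weighted_picard[OF G])
      (simp add: ext_cont_def)
  have "dist (T v1) (T v2) \<le> 1/2 * dist v1 v2" for v1 v2
  proof (rule dist_bound)
    fix t
    have "clamp 0 1 t \<in> {0..1::real}" using clamp_in_interval[of 0 1 t] by simp
    then show "dist (T v1 t) (T v2 t) \<le> 1/2 * dist v1 v2"
      unfolding T dist_real_def P_def
      by (intro order.trans[OF weighted_picard_contraction[OF G lip L, where d="dist v1 v2"]])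
        (auto simp: dist_real_def[symmetric] dist_bounded)
  qed
  then obtain v where v: "T v = v" using banach_fix_type[of "1/2" T] by auto
  have "ivp_solution G s (\<lambda>t. exp ((L + 1) * t) * v t)"
    unfolding ivp_solution_def
  proof (intro conjI ballI)
    fix t :: real assume "t \<in> {0..1}"
    then have "v t = P v t" using T[of v t] v by simp
    then show "exp ((L + 1) * t) * v t
        = s * t - repeated_integral (\<lambda>\<tau>. G \<tau> (exp ((L + 1) * \<tau>) * v \<tau>)) t"
      unfolding P_def weighted_picard_def by simp
  qed (intro continuous_intros; simp)
  then show ?thesis by blast
qed

lemma ivp_solution_difference_estimate:
  fixes G1 G2 :: "real \<Rightarrow> real \<Rightarrow> real"
  assumes G1: "continuous_on ({0..1} \<times> UNIV) (\<lambda>(t,x). G1 t x)"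
    and G2: "continuous_on ({0..1} \<times> UNIV) (\<lambda>(t,x). G2 t x)"
    and lip: "\<And>t x y. t \<in> {0..1} \<Longrightarrow> \<bar>G1 t x - G1 t y\<bar> \<le> L * \<bar>x - y\<bar>" and L: "0 \<le> L"
    and u1: "ivp_solution G1 s1 u1" and u2: "ivp_solution G2 s2 u2"
    and D: "\<And>t. t \<in> {0..1} \<Longrightarrow> \<bar>G1 t (u2 t) - G2 t (u2 t)\<bar> \<le> D"
    and d: "0 \<le> d" "\<And>\<tau>. \<tau> \<in> {0..1} \<Longrightarrow> \<bar>u1 \<tau> - u2 \<tau>\<bar> \<le> d * exp ((L + 1) * \<tau>)"
    and t: "t \<in> {0..1}"
  shows "\<bar>u1 t - u2 t\<bar> \<le> (\<bar>s1 - s2\<bar> + D + d / 2) * exp ((L + 1) * t)"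
proof -
  define \<gamma> where "\<gamma> = L + 1"
  have \<gamma>: "0 < \<gamma>" using L by (simp add: \<gamma>_def)
  have D0: "0 \<le> D" using D[of 0] by (meson abs_ge_zero atLeastAtMost_iff order_trans zero_le_one order_refl)
  have u: "continuous_on {0..1} u1" "continuous_on {0..1} u2"
    using u1 u2 unfolding ivp_solution_def by auto
  have g: "continuous_on {0..1} (\<lambda>\<tau>. G1 \<tau> (u1 \<tau>))" "continuous_on {0..1} (\<lambda>\<tau>. G1 \<tau> (u2 \<tau>))"
    "continuous_on {0..1} (\<lambda>\<tau>. G2 \<tau> (u2 \<tau>))"
    by (intro continuous_on_compose_01[OF G1] continuous_on_compose_01[OF G2] u; simp)+
  define a where "a = repeated_integral (\<lambda>\<tau>. G1 \<tau> (u1 \<tau>) - G1 \<tau> (u2 \<tau>)) t"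
  define b where "b = repeated_integral (\<lambda>\<tau>. G1 \<tau> (u2 \<tau>) - G2 \<tau> (u2 \<tau>)) t"
  have "u1 t = s1 * t - repeated_integral (\<lambda>\<tau>. G1 \<tau> (u1 \<tau>)) t"
    "u2 t = s2 * t - repeated_integral (\<lambda>\<tau>. G2 \<tau> (u2 \<tau>)) t"
    using u1 u2 t unfolding ivp_solution_def by auto
  then have "u1 t - u2 t = (s1 - s2) * t - (a + b)"
    unfolding a_def b_def repeated_integral_diff[OF g(1,2) t] repeated_integral_diff[OF g(2,3) t]
    by (simp add: algebra_simps)
  moreover have "\<bar>a\<bar> \<le> (L * d) / \<gamma>\<^sup>2 * exp (\<gamma> * t)"
    unfolding a_def
  proof (rule abs_repeated_integral_le_exp[OF _ t \<gamma>])
    fix \<tau> assume "\<tau> \<in> {0..t}"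
    then have \<tau>: "\<tau> \<in> {0..1}" using t by auto
    have "L * \<bar>u1 \<tau> - u2 \<tau>\<bar> \<le> L * (d * exp (\<gamma> * \<tau>))"
      using d(2)[OF \<tau>] L unfolding \<gamma>_def by (intro mult_left_mono) auto
    then show "\<bar>G1 \<tau> (u1 \<tau>) - G1 \<tau> (u2 \<tau>)\<bar> \<le> L * d * exp (\<gamma> * \<tau>)"
      using lip[OF \<tau>, of "u1 \<tau>" "u2 \<tau>"] by (simp add: mult.assoc)
  qed (intro continuous_intros g)
  moreover have "\<bar>b\<bar> \<le> D"
    unfolding b_def by (rule abs_repeated_integral_le) (use t D in \<open>auto intro!: continuous_intros g\<close>)
  moreover have "\<bar>s1 - s2\<bar> * t + D \<le> (\<bar>s1 - s2\<bar> + D) * exp (\<gamma> * t)"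
  proof -
    have "1 \<le> exp (\<gamma> * t)" using t \<gamma> by auto
    then have "\<bar>s1 - s2\<bar> * t \<le> \<bar>s1 - s2\<bar> * exp (\<gamma> * t)" "D \<le> D * exp (\<gamma> * t)"
      using t D0 by (auto intro!: mult_left_mono order.trans[OF _ \<open>1 \<le> _\<close>] simp: mult_le_cancel_left1)
    then show ?thesis by (simp add: distrib_right)
  qed
  moreover have "(L * d) / \<gamma>\<^sup>2 \<le> d / 2"
    using mult_right_mono[OF lipschitz_weight_le_half[OF L] d(1)] unfolding \<gamma>_def by simp
  then have "(L * d) / \<gamma>\<^sup>2 * exp (\<gamma> * t) \<le> d / 2 * exp (\<gamma> * t)" by (rule mult_right_mono) simp
  moreover have "\<bar>(s1 - s2) * t\<bar> = \<bar>s1 - s2\<bar> * t" using t by (simp add: abs_mult)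
  ultimately have "\<bar>u1 t - u2 t\<bar> \<le> (\<bar>s1 - s2\<bar> + D) * exp (\<gamma> * t) + d / 2 * exp (\<gamma> * t)"
    by linarith
  then show ?thesis unfolding \<gamma>_def by (simp add: algebra_simps)
qed

lemma ivp_solution_stability:
  fixes G1 G2 :: "real \<Rightarrow> real \<Rightarrow> real"
  assumes G1: "continuous_on ({0..1} \<times> UNIV) (\<lambda>(t,x). G1 t x)"
    and G2: "continuous_on ({0..1} \<times> UNIV) (\<lambda>(t,x). G2 t x)"
    and lip: "\<And>t x y. t \<in> {0..1} \<Longrightarrow> \<bar>G1 t x - G1 t y\<bar> \<le> L * \<bar>x - y\<bar>" and L: "0 \<le> L"
    and u1: "ivp_solution G1 s1 u1" and u2: "ivp_solution G2 s2 u2"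
    and D: "\<And>t. t \<in> {0..1} \<Longrightarrow> \<bar>G1 t (u2 t) - G2 t (u2 t)\<bar> \<le> D"
    and t: "t \<in> {0..1}"
  shows "\<bar>u1 t - u2 t\<bar> \<le> exp (L + 1) * (2 * (\<bar>s1 - s2\<bar> + D))"
proof -
  define w where "w t = \<bar>u1 t - u2 t\<bar> / exp ((L + 1) * t)" for t
  have "continuous_on {0..1} w"
    using u1 u2 unfolding w_def ivp_solution_def by (intro continuous_intros) auto
  then obtain ts where ts: "ts \<in> {0..1}" and max: "\<And>t. t \<in> {0..1} \<Longrightarrow> w t \<le> w ts"
    using continuous_attains_sup[OF compact_Icc, of 0 1 w] by fastforce
  have d: "0 \<le> w ts" "\<And>\<tau>. \<tau> \<in> {0..1} \<Longrightarrow> \<bar>u1 \<tau> - u2 \<tau>\<bar> \<le> w ts * exp ((L + 1) * \<tau>)"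
    using max unfolding w_def by (auto simp: divide_le_eq)
  have "w ts \<le> \<bar>s1 - s2\<bar> + D + w ts / 2"
    using ivp_solution_difference_estimate[OF G1 G2 lip L u1 u2 D d ts] unfolding w_def
    by (simp add: divide_le_eq)
  then have "w ts \<le> 2 * (\<bar>s1 - s2\<bar> + D)" by simp
  moreover have "exp ((L + 1) * t) \<le> exp (L + 1)" using t L by (simp add: mult_left_le_one_le)
  ultimately have "w ts * exp ((L + 1) * t) \<le> 2 * (\<bar>s1 - s2\<bar> + D) * exp (L + 1)"
    using d(1) by (intro mult_mono) auto
  then show ?thesis using d(2)[OF t] by (simp add: mult.commute)
qed

section \<open>The principal eigenvalue of -w'' = \<mu> m w\<close>

lemma integral_pos_if_pos_at_point:
  fixes f :: "real \<Rightarrow> real"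
  assumes "continuous_on {a..b} f" "a < b" "\<And>x. x \<in> {a..b} \<Longrightarrow> 0 \<le> f x"
    "c \<in> {a..b}" "0 < f c"
  shows "0 < integral {a..b} f"
proof -
  have "0 \<le> integral {a..b} f"
    by (rule integral_nonneg) (use assms integrable_continuous_real in auto)
  moreover have "integral {a..b} f \<noteq> 0" using integral_eq_0_iff[OF assms(1-3)] assms(4,5) by auto
  ultimately show ?thesis by simp
qed

lemma first_zero_exists:
  fixes f :: "real \<Rightarrow> real"
  assumes fc: "continuous_on {0..1} f" and A: "0 < A" and pos: "\<And>t. 0 < t \<Longrightarrow> t \<le> A \<Longrightarrow> 0 < f t"
    and tau: "0 < \<tau>" "\<tau> \<le> 1" "f \<tau> \<le> 0"
  obtains \<tau>1 where "A < \<tau>1" "\<tau>1 \<le> \<tau>" "f \<tau>1 = 0" "\<And>t. 0 < t \<Longrightarrow> t < \<tau>1 \<Longrightarrow> 0 < f t"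
proof -
  have At: "A < \<tau>" using pos[of \<tau>] tau by force
  define K where "K = {t \<in> {A..\<tau>}. f t \<le> 0}"
  have fcA: "continuous_on {A..\<tau>} f" using fc by (rule continuous_on_subset) (use A tau in auto)
  have cl: "closed K" unfolding K_def
    using continuous_on_closed_Collect_le[OF fcA continuous_on_const, of 0] by simp
  have ne: "K \<noteq> {}" "\<tau> \<in> K" using tau At unfolding K_def by auto
  have bb: "bdd_below K" unfolding K_def by (rule bdd_belowI[of _ A]) auto
  define \<tau>1 where "\<tau>1 = Inf K"
  have t1K: "\<tau>1 \<in> K" unfolding \<tau>1_def by (rule closed_contains_Inf[OF ne(1) bb cl])
  have low: "t \<in> K \<Longrightarrow> \<tau>1 \<le> t" for t unfolding \<tau>1_def by (rule cInf_lower[OF _ bb])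
  have t1: "A \<le> \<tau>1" "\<tau>1 \<le> \<tau>" "f \<tau>1 \<le> 0" using t1K low[OF ne(2)] unfolding K_def by auto
  have At1: "A < \<tau>1" using t1 pos[of A] A by (cases "A = \<tau>1") auto
  have f0: "f \<tau>1 = 0"
  proof (rule ccontr)
    assume "f \<tau>1 \<noteq> 0"
    then have "f \<tau>1 < 0" using t1 by auto
    moreover have "f A > 0" using pos[of A] A by auto
    moreover have "continuous_on {A..\<tau>1} f" using fc by (rule continuous_on_subset) (use A t1 tau in auto)
    ultimately obtain x where x: "A \<le> x" "x \<le> \<tau>1" "f x = 0" using IVT2'[of f \<tau>1 0 A] At1 by force
    then have "\<tau>1 \<le> x" using t1 by (intro low) (auto simp: K_def)
    then show False using x \<open>f \<tau>1 < 0\<close> by auto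
  qed
  have "0 < f t" if "0 < t" "t < \<tau>1" for t
  proof (cases "t \<le> A")
    case False
    then have "t \<notin> K" using low that by force
    then show ?thesis using False that t1 unfolding K_def by auto
  qed (use pos that in auto)
  then show ?thesis using that At1 t1 f0 by blast
qed

lemma derivative_neg_at_first_zero:
  fixes f f' :: "real \<Rightarrow> real"
  assumes d: "\<And>t. t \<in> {l..r} \<Longrightarrow> (f has_real_derivative f' t) (at t within {l..r})"
    and dec: "\<And>x y. l \<le> x \<Longrightarrow> x \<le> y \<Longrightarrow> y \<le> T \<Longrightarrow> f' y \<le> f' x"
    and pos: "\<And>t. l < t \<Longrightarrow> t < T \<Longrightarrow> 0 < f t" and zero: "f T = 0" and T: "l < T" "T \<le> r"
  shows "f' T < 0"
proof (rule ccontr)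
  assume "\<not> f' T < 0"
  have "f ((l + T) / 2) \<le> f T"
  proof (rule nondecreasing_within_Icc[OF d])
    fix t assume "t \<in> {(l + T) / 2..T}"
    then have "f' T \<le> f' t" using T by (intro dec) auto
    then show "0 \<le> f' t" using \<open>\<not> f' T < 0\<close> by simp
  qed (use T in auto)
  then show False using pos[of "(l + T) / 2"] zero T by simp
qed

lemma wronskian_constant:
  fixes w w' V dV q :: "real \<Rightarrow> real"
  assumes dw: "\<And>t. t \<in> {0<..<1} \<Longrightarrow> (w has_real_derivative w' t) (at t)"
    and ddw: "\<And>t. t \<in> {0<..<1} \<Longrightarrow> (w' has_real_derivative - q t * w t) (at t)"
    and dV: "\<And>t. t \<in> {0<..<1} \<Longrightarrow> (V has_real_derivative dV t) (at t)"
    and ddV: "\<And>t. t \<in> {0<..<1} \<Longrightarrow> (dV has_real_derivative - q t * V t) (at t)"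
  obtains c where "\<And>t. t \<in> {0<..<1} \<Longrightarrow> w' t * V t - w t * dV t = c"
proof -
  have "\<exists>c. \<forall>t\<in>{0<..<1}. w' t * V t - w t * dV t = c"
  proof (rule has_field_derivative_zero_constant)
    fix t :: real assume "t \<in> {0<..<1}"
    from DERIV_diff[OF DERIV_mult[OF ddw dV] DERIV_mult[OF dw ddV], OF this this this this]
    show "((\<lambda>t. w' t * V t - w t * dV t) has_real_derivative 0) (at t within {0<..<1})"
      by (auto simp: algebra_simps intro: has_field_derivative_at_within)
  qed simp
  then show ?thesis using that by blast
qed

lemma wronskian_zero:
  fixes w w' V dV :: "real \<Rightarrow> real"
  assumes w: "continuous_on {0..1} w" "w 0 = 0" and w'_bound: "\<And>t. t \<in> {0<..<1} \<Longrightarrow> \<bar>w' t\<bar> \<le> B"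
    and V: "continuous_on {0..1} V" "V 0 = 0" and dV_bound: "\<And>t. t \<in> {0<..<1} \<Longrightarrow> \<bar>dV t\<bar> \<le> B'"
    and c: "\<And>t. t \<in> {0<..<1} \<Longrightarrow> w' t * V t - w t * dV t = c"
  shows "c = 0"
proof -
  have "\<bar>c\<bar> \<le> B * \<bar>V 0\<bar> + B' * \<bar>w 0\<bar>"
  proof (rule ge_on_01_if_ge_on_open_01[where h="\<lambda>t. B * \<bar>V t\<bar> + B' * \<bar>w t\<bar>"])
    fix t :: real assume t: "t \<in> {0<..<1}"
    have "\<bar>c\<bar> \<le> \<bar>w' t\<bar> * \<bar>V t\<bar> + \<bar>w t\<bar> * \<bar>dV t\<bar>"
      using c[OF t] abs_triangle_ineq4[of "w' t * V t" "w t * dV t"] by (simp add: abs_mult)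
    also have "\<dots> \<le> B * \<bar>V t\<bar> + \<bar>w t\<bar> * B'"
      using w'_bound[OF t] dV_bound[OF t] by (intro add_mono mult_mono) auto
    finally show "\<bar>c\<bar> \<le> B * \<bar>V t\<bar> + B' * \<bar>w t\<bar>" by (simp add: mult.commute)
  qed (auto intro!: continuous_intros w V)
  then show ?thesis using w V by simp
qed

lemma proportional_if_wronskian_zero:
  fixes w w' V dV :: "real \<Rightarrow> real"
  assumes dw: "\<And>t. t \<in> {0<..<1} \<Longrightarrow> (w has_real_derivative w' t) (at t)"
    and dV: "\<And>t. t \<in> {0<..<1} \<Longrightarrow> (V has_real_derivative dV t) (at t)"
    and V: "\<And>t. t \<in> {0<..<1} \<Longrightarrow> V t \<noteq> 0"
    and W: "\<And>t. t \<in> {0<..<1} \<Longrightarrow> w' t * V t - w t * dV t = 0"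
  obtains k where "\<And>t. t \<in> {0<..<1} \<Longrightarrow> w t = k * V t"
proof -
  have "\<exists>k. \<forall>t\<in>{0<..<1}. w t / V t = k"
  proof (rule has_field_derivative_zero_constant)
    fix t :: real assume t: "t \<in> {0<..<1}"
    from DERIV_divide[OF dw[OF t] dV[OF t] V[OF t]] W[OF t]
    show "((\<lambda>t. w t / V t) has_real_derivative 0) (at t within {0<..<1})"
      by (auto intro: has_field_derivative_at_within)
  qed simp
  then show ?thesis using that V by (metis nonzero_eq_divide_eq)
qed

lemma derivative_bounded_if_second_derivative_bounded:
  fixes w' w'' :: "real \<Rightarrow> real"
  assumes ddw: "\<And>t. t \<in> {0<..<1} \<Longrightarrow> (w' has_real_derivative w'' t) (at t)"
    and bound: "\<And>t. t \<in> {0<..<1} \<Longrightarrow> \<bar>w'' t\<bar> \<le> C" and t: "t \<in> {0<..<1}"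
  shows "\<bar>w' t\<bar> \<le> \<bar>w' (1/2)\<bar> + C"
proof -
  define a b where "a = min t (1/2)" and "b = max t (1/2)"
  have ab: "0 < a" "a \<le> b" "b < 1" using t unfolding a_def b_def by auto
  have "\<bar>w' b - w' a\<bar> \<le> C"
  proof (cases "a = b")
    case True
    then show ?thesis using bound[of a] ab by auto
  next
    case False
    then obtain z where z: "a < z" "z < b" "w' b - w' a = (b - a) * w'' z"
      using MVT2[of a b w' w''] ddw ab by force
    have "\<bar>w' b - w' a\<bar> = (b - a) * \<bar>w'' z\<bar>" using z ab by (simp add: abs_mult)
    also have "\<dots> \<le> 1 * C" using ab z bound[of z] by (intro mult_mono) auto
    finally show ?thesis by simp
  qed
  then have "\<bar>w' t - w' (1/2)\<bar> \<le> C"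
    unfolding a_def b_def by (cases "t \<le> 1/2") (auto simp: abs_minus_commute)
  then show ?thesis by linarith
qed

locale weight =
  fixes m :: "real \<Rightarrow> real"
  assumes m_cont: "continuous_on {0..1} m"
    and m_nonneg: "\<And>t. t \<in> {0..1} \<Longrightarrow> 0 \<le> m t"
    and m_somewhere_pos: "\<exists>t\<in>{0..1}. 0 < m t"
begin

definition m_bound :: real where "m_bound = Sup (m ` {0..1}) + 1"

lemma m_le_m_bound: "t \<in> {0..1} \<Longrightarrow> m t \<le> m_bound" and m_bound_pos: "0 < m_bound"
proof -
  have bdd: "bdd_above (m ` {0..1})"
    by (intro bounded_imp_bdd_above compact_imp_bounded compact_continuous_image m_cont) auto
  have up: "m t \<le> Sup (m ` {0..1})" if "t \<in> {0..1}" for t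
    using cSup_upper[OF imageI[OF that] bdd] .
  show "t \<in> {0..1} \<Longrightarrow> m t \<le> m_bound" unfolding m_bound_def using up[of t] by simp
  show "0 < m_bound" unfolding m_bound_def using up[of 0] m_nonneg[of 0] by simp
qed

lemma m_pos_on_interval:
  obtains a b c where "0 \<le> a" "a < b" "b \<le> 1" "0 < c" "\<And>t. t \<in> {a..b} \<Longrightarrow> c < m t"
proof -
  obtain t0 where t0: "t0 \<in> {0..1}" "0 < m t0" using m_somewhere_pos by auto
  obtain \<epsilon> where \<epsilon>: "\<epsilon> > 0" "\<And>t. t \<in> {0..1} \<Longrightarrow> dist t t0 < \<epsilon> \<Longrightarrow> dist (m t) (m t0) < m t0 / 2"
    using m_cont t0 unfolding continuous_on_iff by (metis half_gt_zero)
  define a b where "a = max 0 (t0 - \<epsilon>/2)" and "b = min 1 (t0 + \<epsilon>/2)"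
  show ?thesis
  proof (rule that[of a b "m t0 / 2"])
    fix t assume "t \<in> {a..b}"
    then have "t \<in> {0..1}" "dist t t0 < \<epsilon>" using \<epsilon>(1) unfolding a_def b_def dist_real_def by auto
    from \<epsilon>(2)[OF this] show "m t0 / 2 < m t" unfolding dist_real_def by linarith
  qed (use t0 \<epsilon> in \<open>auto simp: a_def b_def\<close>)
qed

lemma m_pos_inside:
  obtains c where "0 < c" "c < 1" "0 < m c"
proof -
  obtain a b c where "0 \<le> a" "a < b" "b \<le> 1" "0 < c" "\<And>t. t \<in> {a..b} \<Longrightarrow> c < m t"
    using m_pos_on_interval by blast
  moreover from this have "(a + b) / 2 \<in> {a..b}" by auto
  ultimately show ?thesis using that[of "(a + b) / 2"] by fastforce
qed

definition linear_rhs :: "real \<Rightarrow> real \<Rightarrow> real \<Rightarrow> real" where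
  "linear_rhs \<mu> t x = \<mu> * m t * x"

lemma continuous_linear_rhs: "continuous_on ({0..1} \<times> UNIV) (\<lambda>(t,x). linear_rhs \<mu> t x)"
  unfolding linear_rhs_def case_prod_beta
  by (intro continuous_intros continuous_on_compose2[OF m_cont]) auto

lemma lipschitz_linear_rhs:
  assumes "t \<in> {0..1}"
  shows "\<bar>linear_rhs \<mu> t x - linear_rhs \<mu> t y\<bar> \<le> (\<bar>\<mu>\<bar> * m_bound) * \<bar>x - y\<bar>"
proof -
  have "\<bar>linear_rhs \<mu> t x - linear_rhs \<mu> t y\<bar> = \<bar>\<mu>\<bar> * m t * \<bar>x - y\<bar>"
    unfolding linear_rhs_def using m_nonneg[OF assms] by (simp add: abs_mult right_diff_distrib[symmetric])
  also have "\<dots> \<le> \<bar>\<mu>\<bar> * m_bound * \<bar>x - y\<bar>"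
    using m_le_m_bound[OF assms] by (intro mult_right_mono mult_left_mono) auto
  finally show ?thesis .
qed

definition v :: "real \<Rightarrow> real \<Rightarrow> real" where "v \<mu> = (SOME u. ivp_solution (linear_rhs \<mu>) 1 u)"
definition dv :: "real \<Rightarrow> real \<Rightarrow> real" where "dv \<mu> = ivp_slope (linear_rhs \<mu>) 1 (v \<mu>)"

lemma ivp_solution_v: "ivp_solution (linear_rhs \<mu>) 1 (v \<mu>)"
proof -
  have "\<exists>u. ivp_solution (linear_rhs \<mu>) 1 u"
    by (rule ivp_solution_exists[OF continuous_linear_rhs lipschitz_linear_rhs]) (use m_bound_pos in auto)
  then show ?thesis unfolding v_def by (rule someI_ex)
qed

lemma v_cont: "continuous_on {0..1} (v \<mu>)"
  using ivp_solution_v unfolding ivp_solution_def by auto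

lemma v_0: "v \<mu> 0 = 0"
  using ivp_solution_0[OF ivp_solution_v] .

lemma v_eq: "t \<in> {0..1} \<Longrightarrow> v \<mu> t = t - repeated_integral (\<lambda>\<tau>. \<mu> * m \<tau> * v \<mu> \<tau>) t"
  using ivp_solution_v unfolding ivp_solution_def linear_rhs_def by auto

lemma v_has_derivative: "t \<in> {0..1} \<Longrightarrow> (v \<mu> has_real_derivative dv \<mu> t) (at t within {0..1})"
  and dv_has_derivative:
    "t \<in> {0..1} \<Longrightarrow> (dv \<mu> has_real_derivative - (\<mu> * m t * v \<mu> t)) (at t within {0..1})"
  using ivp_solution_has_derivative[OF continuous_linear_rhs ivp_solution_v]
  unfolding dv_def linear_rhs_def by auto

lemma v_has_derivative_at:
  assumes t: "t \<in> {0<..<1}"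
  shows "(v \<mu> has_real_derivative dv \<mu> t) (at t)"
    and "(dv \<mu> has_real_derivative - (\<mu> * m t) * v \<mu> t) (at t)"
proof -
  have "t \<in> {0..1}" using t by auto
  from v_has_derivative[OF this] dv_has_derivative[OF this]
  show "(v \<mu> has_real_derivative dv \<mu> t) (at t)" "(dv \<mu> has_real_derivative - (\<mu> * m t) * v \<mu> t) (at t)"
    unfolding at_within_01_eq_at[OF t] by (auto simp: mult.assoc)
qed

lemma dv_cont: "continuous_on {0..1} (dv \<mu>)"
  unfolding continuous_on_eq_continuous_within using dv_has_derivative DERIV_continuous by blast

lemma v_bounded:
  obtains B where "0 \<le> B" "\<And>\<mu> t. \<bar>\<mu>\<bar> \<le> \<Lambda> \<Longrightarrow> t \<in> {0..1} \<Longrightarrow> \<bar>v \<mu> t\<bar> \<le> B"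
proof -
  define C where "C = exp (\<bar>\<Lambda>\<bar> * m_bound + 1) * (2 * (\<bar>\<Lambda>\<bar> * m_bound))"
  have C: "0 \<le> C" unfolding C_def using m_bound_pos by simp
  have "\<bar>v \<mu> t\<bar> \<le> 1 + C" if \<mu>: "\<bar>\<mu>\<bar> \<le> \<Lambda>" and t: "t \<in> {0..1}" for \<mu> t
  proof -
    have id: "ivp_solution (\<lambda>t x. 0) 1 (\<lambda>t. t)"
      unfolding ivp_solution_def repeated_integral_def by (auto intro: continuous_intros)
    have "\<bar>v \<mu> t - t\<bar> \<le> exp (\<bar>\<mu>\<bar> * m_bound + 1) * (2 * (\<bar>1 - 1\<bar> + \<bar>\<Lambda>\<bar> * m_bound))"
    proof (rule ivp_solution_stability[OF continuous_linear_rhs _ lipschitz_linear_rhs _ ivp_solution_v id _ t])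
      fix t :: real assume t: "t \<in> {0..1}"
      have "\<bar>linear_rhs \<mu> t t - 0\<bar> = \<bar>\<mu>\<bar> * m t * t"
        unfolding linear_rhs_def using t m_nonneg[OF t] by (simp add: abs_mult)
      also have "\<dots> \<le> \<bar>\<Lambda>\<bar> * m_bound * 1"
        using t m_nonneg[OF t] m_le_m_bound[OF t] \<mu> by (intro mult_mono) auto
      finally show "\<bar>linear_rhs \<mu> t t - 0\<bar> \<le> \<bar>\<Lambda>\<bar> * m_bound" by simp
    qed (use m_bound_pos in \<open>auto simp: continuous_on_const\<close>)
    also have "\<dots> = exp (\<bar>\<mu>\<bar> * m_bound + 1) * (2 * (\<bar>\<Lambda>\<bar> * m_bound))" by simp
    also have "\<dots> \<le> C"
      unfolding C_def using \<mu> m_bound_pos by (intro mult_right_mono) (auto simp: mult_right_mono)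
    finally show ?thesis using t by auto
  qed
  then show ?thesis using that[of "1 + C"] C by auto
qed

lemma v_lipschitz_in_parameter:
  obtains K where "0 \<le> K"
    "\<And>\<mu>1 \<mu>2 t. \<bar>\<mu>1\<bar> \<le> \<Lambda> \<Longrightarrow> \<bar>\<mu>2\<bar> \<le> \<Lambda> \<Longrightarrow> t \<in> {0..1} \<Longrightarrow> \<bar>v \<mu>1 t - v \<mu>2 t\<bar> \<le> K * \<bar>\<mu>1 - \<mu>2\<bar>"
proof -
  obtain B where B: "0 \<le> B" "\<And>\<mu> t. \<bar>\<mu>\<bar> \<le> \<Lambda> \<Longrightarrow> t \<in> {0..1} \<Longrightarrow> \<bar>v \<mu> t\<bar> \<le> B"
    using v_bounded by blast
  define K where "K = exp (\<bar>\<Lambda>\<bar> * m_bound + 1) * 2 * m_bound * B"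
  have "\<bar>v \<mu>1 t - v \<mu>2 t\<bar> \<le> K * \<bar>\<mu>1 - \<mu>2\<bar>"
    if \<mu>: "\<bar>\<mu>1\<bar> \<le> \<Lambda>" "\<bar>\<mu>2\<bar> \<le> \<Lambda>" and t: "t \<in> {0..1}" for \<mu>1 \<mu>2 t
  proof -
    have "\<bar>v \<mu>1 t - v \<mu>2 t\<bar>
        \<le> exp (\<bar>\<mu>1\<bar> * m_bound + 1) * (2 * (\<bar>1 - 1\<bar> + \<bar>\<mu>1 - \<mu>2\<bar> * m_bound * B))"
    proof (rule ivp_solution_stability[OF continuous_linear_rhs continuous_linear_rhs
          lipschitz_linear_rhs _ ivp_solution_v ivp_solution_v _ t])
      fix t :: real assume t: "t \<in> {0..1}"
      have "\<bar>linear_rhs \<mu>1 t (v \<mu>2 t) - linear_rhs \<mu>2 t (v \<mu>2 t)\<bar> = \<bar>\<mu>1 - \<mu>2\<bar> * m t * \<bar>v \<mu>2 t\<bar>"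
        unfolding linear_rhs_def using m_nonneg[OF t] by (simp add: abs_mult left_diff_distrib[symmetric])
      also have "\<dots> \<le> \<bar>\<mu>1 - \<mu>2\<bar> * m_bound * B"
        using m_nonneg[OF t] m_le_m_bound[OF t] B(2)[OF \<mu>(2) t] by (intro mult_mono) auto
      finally show "\<bar>linear_rhs \<mu>1 t (v \<mu>2 t) - linear_rhs \<mu>2 t (v \<mu>2 t)\<bar> \<le> \<bar>\<mu>1 - \<mu>2\<bar> * m_bound * B" .
    qed (use m_bound_pos in auto)
    also have "\<dots> = exp (\<bar>\<mu>1\<bar> * m_bound + 1) * (2 * (\<bar>\<mu>1 - \<mu>2\<bar> * m_bound * B))" by simp
    also have "\<dots> \<le> exp (\<bar>\<Lambda>\<bar> * m_bound + 1) * (2 * (\<bar>\<mu>1 - \<mu>2\<bar> * m_bound * B))"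
      using \<mu> m_bound_pos B(1) by (intro mult_right_mono) (auto simp: mult_right_mono)
    finally show ?thesis unfolding K_def by (simp add: algebra_simps)
  qed
  then show ?thesis using that[of K] B(1) m_bound_pos unfolding K_def by auto
qed

lemma v_pos_near_0:
  obtains a where "0 < a" "a \<le> 1/2" "\<And>\<mu> t. \<bar>\<mu>\<bar> \<le> \<Lambda> \<Longrightarrow> 0 < t \<Longrightarrow> t \<le> a \<Longrightarrow> 0 < v \<mu> t"
proof -
  obtain B where B: "0 \<le> B" "\<And>\<mu> t. \<bar>\<mu>\<bar> \<le> \<Lambda> \<Longrightarrow> t \<in> {0..1} \<Longrightarrow> \<bar>v \<mu> t\<bar> \<le> B"
    using v_bounded by blast
  define Q where "Q = \<bar>\<Lambda>\<bar> * m_bound * B"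
  have Q: "0 \<le> Q" unfolding Q_def using B(1) m_bound_pos by simp
  define a where "a = 1 / (2 * Q + 2)"
  have a: "0 < a" "a \<le> 1/2" "Q * a < 1" unfolding a_def using Q by (auto simp: field_simps)
  have "0 < v \<mu> t" if \<mu>: "\<bar>\<mu>\<bar> \<le> \<Lambda>" and t: "0 < t" "t \<le> a" for \<mu> t
  proof -
    have t1: "t \<in> {0..1}" using a t by auto
    have "\<bar>repeated_integral (\<lambda>\<tau>. \<mu> * m \<tau> * v \<mu> \<tau>) t\<bar> \<le> Q * t\<^sup>2"
    proof (rule abs_repeated_integral_le_square[OF _ t1])
      fix \<tau> assume "\<tau> \<in> {0..t}"
      then have \<tau>: "\<tau> \<in> {0..1}" using t1 by auto
      have "\<bar>\<mu> * m \<tau> * v \<mu> \<tau>\<bar> = \<bar>\<mu>\<bar> * m \<tau> * \<bar>v \<mu> \<tau>\<bar>" using m_nonneg[OF \<tau>] by (simp add: abs_mult)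
      also have "\<dots> \<le> \<bar>\<Lambda>\<bar> * m_bound * B"
        using \<mu> m_nonneg[OF \<tau>] m_le_m_bound[OF \<tau>] B(2)[OF \<mu> \<tau>] by (intro mult_mono) auto
      finally show "\<bar>\<mu> * m \<tau> * v \<mu> \<tau>\<bar> \<le> Q" unfolding Q_def .
    qed (intro continuous_intros m_cont v_cont)
    then have "t * (1 - Q * t) \<le> v \<mu> t" using v_eq[OF t1, of \<mu>] by (simp add: power2_eq_square algebra_simps)
    moreover have "Q * t < 1" using a Q t by (smt (verit) mult_left_mono)
    ultimately show ?thesis using t by (smt (verit) mult_pos_pos)
  qed
  then show ?thesis using that a by blast
qed

lemma v_pos_if_nonpos:
  assumes "\<mu> \<le> 0" "0 < \<tau>" "\<tau> \<le> 1"
  shows "0 < v \<mu> \<tau>"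
proof (rule ccontr)
  assume "\<not> 0 < v \<mu> \<tau>"
  obtain a where a: "0 < a" "a \<le> 1/2" "\<And>\<mu>' t. \<bar>\<mu>'\<bar> \<le> \<bar>\<mu>\<bar> \<Longrightarrow> 0 < t \<Longrightarrow> t \<le> a \<Longrightarrow> 0 < v \<mu>' t"
    using v_pos_near_0 by blast
  have "v \<mu> \<tau> \<le> 0" using \<open>\<not> 0 < v \<mu> \<tau>\<close> by simp
  then obtain \<tau>1 where \<tau>1: "a < \<tau>1" "\<tau>1 \<le> \<tau>" "v \<mu> \<tau>1 = 0" "\<And>t. 0 < t \<Longrightarrow> t < \<tau>1 \<Longrightarrow> 0 < v \<mu> t"
    using first_zero_exists[OF v_cont a(1) a(3)[of \<mu>, OF order.refl] assms(2,3)] by blast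
  have \<tau>1': "\<tau>1 \<in> {0..1}" using \<tau>1 a assms by auto
  have "repeated_integral (\<lambda>s. \<mu> * m s * v \<mu> s) \<tau>1 \<le> integral {0..\<tau>1} (\<lambda>s. 0)"
    unfolding repeated_integral_def
  proof (rule integral_le)
    show "(\<lambda>s. (\<tau>1 - s) * (\<mu> * m s * v \<mu> s)) integrable_on {0..\<tau>1}"
      using \<tau>1' by (intro integrable_on_subinterval_01 continuous_intros m_cont v_cont) auto
    fix s assume s: "s \<in> {0..\<tau>1}"
    then have "0 \<le> v \<mu> s" using \<tau>1(3) \<tau>1(4)[of s] v_0[of \<mu>] by (cases "s = 0"; cases "s = \<tau>1") auto
    then have "0 \<le> (\<tau>1 - s) * (m s * v \<mu> s)" using s \<tau>1' m_nonneg[of s] by simp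
    then have "\<mu> * ((\<tau>1 - s) * (m s * v \<mu> s)) \<le> 0" using assms(1) by (simp add: mult_nonpos_nonneg)
    then show "(\<tau>1 - s) * (\<mu> * m s * v \<mu> s) \<le> 0" by (simp add: algebra_simps)
  qed (rule integrable_0)
  then have "\<tau>1 \<le> v \<mu> \<tau>1" using v_eq[OF \<tau>1', of \<mu>] by simp
  then show False using \<tau>1 a by simp
qed

text \<open>Sturm comparison with \<open>sin (\<kappa> * (t - a))\<close>, which vanishes at a and b.\<close>
lemma v_not_pos_if_large:
  assumes ab: "0 \<le> a" "a < b" "b \<le> 1" and \<kappa>: "\<kappa> = pi / (b - a)"
    and large: "\<And>t. t \<in> {a..b} \<Longrightarrow> \<kappa>\<^sup>2 < \<Lambda> * m t"
  shows "\<exists>\<tau>\<in>{0<..1}. v \<Lambda> \<tau> \<le> 0"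
proof (rule ccontr)
  assume "\<not> ?thesis"
  then have pos: "0 < v \<Lambda> t" if "0 < t" "t \<le> 1" for t using that by (metis greaterThanAtMost_iff not_le)
  have vnn: "0 \<le> v \<Lambda> t" if "t \<in> {0..1}" for t
    using pos[of t] that v_0 by (cases "t = 0") (auto simp: less_imp_le)
  have \<kappa>: "0 < \<kappa>" "\<kappa> * (b - a) = pi" unfolding \<kappa> using ab by auto
  define w where "w t = sin (\<kappa> * (t - a))" for t
  define dw where "dw t = \<kappa> * cos (\<kappa> * (t - a))" for t
  have w_deriv: "(w has_real_derivative dw t) (at t within {0..1})" for t
    unfolding w_def dw_def by (auto intro!: derivative_eq_intros)
  have dw_deriv: "(dw has_real_derivative - (\<kappa>\<^sup>2 * w t)) (at t within {0..1})" for t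
    unfolding w_def dw_def by (auto intro!: derivative_eq_intros simp: power2_eq_square)
  have wnn: "0 \<le> w t" if "t \<in> {a..b}" for t
    unfolding w_def using that \<kappa> mult_left_mono[of t b \<kappa>] by (intro sin_ge_zero) (auto simp: algebra_simps)
  define f where "f t = v \<Lambda> t * (\<kappa>\<^sup>2 * w t) - (\<Lambda> * m t * v \<Lambda> t) * w t" for t
  have "(f has_integral ((dv \<Lambda> b * w b - v \<Lambda> b * dw b) - (dv \<Lambda> a * w a - v \<Lambda> a * dw a))) {a..b}"
    unfolding f_def using ab
    by (intro lagrange_identity_has_integral[where du="dv \<Lambda>" and dp=dw,
          OF v_has_derivative dv_has_derivative w_deriv dw_deriv]) auto
  moreover have "(dv \<Lambda> b * w b - v \<Lambda> b * dw b) - (dv \<Lambda> a * w a - v \<Lambda> a * dw a) = \<kappa> * (v \<Lambda> b + v \<Lambda> a)"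
    using \<kappa> by (simp add: w_def dw_def algebra_simps)
  ultimately have "0 \<le> integral {a..b} f" using \<kappa> vnn[of a] vnn[of b] ab by (simp add: integral_unique)
  moreover have "integral {a..b} (\<lambda>t. - f t) > 0"
  proof (rule integral_pos_if_pos_at_point)
    show "continuous_on {a..b} (\<lambda>t. - f t)" unfolding f_def w_def
      by (intro continuous_intros continuous_on_subset[OF v_cont] continuous_on_subset[OF m_cont])
        (use ab in auto)
    show "0 \<le> - f t" if "t \<in> {a..b}" for t
    proof -
      have "0 \<le> (\<Lambda> * m t - \<kappa>\<^sup>2) * (v \<Lambda> t * w t)"
        using large[OF that] vnn[of t] wnn[OF that] ab that by (intro mult_nonneg_nonneg) auto
      then show ?thesis by (simp add: f_def algebra_simps)
    qed
    have "w ((a + b) / 2) = 1" unfolding w_def using \<kappa> by (simp add: field_simps)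
    then show "0 < - f ((a + b) / 2)"
      using large[of "(a + b) / 2"] ab pos[of "(a + b) / 2"] by (simp add: f_def algebra_simps)
  qed (use ab in auto)
  ultimately show False by simp
qed

lemma v_has_zero_for_large_parameter:
  obtains \<Lambda> \<tau> where "0 < \<Lambda>" "0 < \<tau>" "\<tau> \<le> 1" "v \<Lambda> \<tau> \<le> 0"
proof -
  obtain a b c where ab: "0 \<le> a" "a < b" "b \<le> 1" and c: "0 < c" and mc: "\<And>t. t \<in> {a..b} \<Longrightarrow> c < m t"
    using m_pos_on_interval by blast
  define \<Lambda> where "\<Lambda> = (pi / (b - a))\<^sup>2 / c + 1"
  have \<Lambda>: "0 < \<Lambda>" "(pi / (b - a))\<^sup>2 < \<Lambda> * c"
    unfolding \<Lambda>_def using c by (simp add: add_nonneg_pos, simp add: field_simps)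
  have "(pi / (b - a))\<^sup>2 < \<Lambda> * m t" if "t \<in> {a..b}" for t
    using \<Lambda> mult_strict_left_mono[OF mc[OF that] \<Lambda>(1)] by linarith
  then obtain \<tau> where "\<tau> \<in> {0<..1}" "v \<Lambda> \<tau> \<le> 0" using v_not_pos_if_large[OF ab refl] by blast
  then show ?thesis using that \<Lambda>(1) by auto
qed

lemma v_pos_open:
  assumes pos: "\<And>\<tau>. 0 < \<tau> \<Longrightarrow> \<tau> \<le> 1 \<Longrightarrow> 0 < v \<mu>0 \<tau>"
  obtains \<epsilon> where "0 < \<epsilon>" "\<And>\<mu> \<tau>. \<bar>\<mu> - \<mu>0\<bar> < \<epsilon> \<Longrightarrow> 0 < \<tau> \<Longrightarrow> \<tau> \<le> 1 \<Longrightarrow> 0 < v \<mu> \<tau>"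
proof -
  define \<Lambda> where "\<Lambda> = \<bar>\<mu>0\<bar> + 1"
  obtain a where a: "0 < a" "a \<le> 1/2" "\<And>\<mu> t. \<bar>\<mu>\<bar> \<le> \<Lambda> \<Longrightarrow> 0 < t \<Longrightarrow> t \<le> a \<Longrightarrow> 0 < v \<mu> t"
    using v_pos_near_0 by blast
  obtain K where K: "0 \<le> K"
    "\<And>\<mu>1 \<mu>2 t. \<bar>\<mu>1\<bar> \<le> \<Lambda> \<Longrightarrow> \<bar>\<mu>2\<bar> \<le> \<Lambda> \<Longrightarrow> t \<in> {0..1} \<Longrightarrow> \<bar>v \<mu>1 t - v \<mu>2 t\<bar> \<le> K * \<bar>\<mu>1 - \<mu>2\<bar>"
    using v_lipschitz_in_parameter by blast
  have "continuous_on {a..1} (v \<mu>0)" using a by (intro continuous_on_subset[OF v_cont]) auto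
  then have "\<exists>x\<in>{a..1}. \<forall>y\<in>{a..1}. v \<mu>0 x \<le> v \<mu>0 y"
    using a by (intro continuous_attains_inf[OF compact_Icc]) auto
  then obtain ts where ts: "ts \<in> {a..1}" "\<And>t. t \<in> {a..1} \<Longrightarrow> v \<mu>0 ts \<le> v \<mu>0 t" by blast
  define \<eta> where "\<eta> = v \<mu>0 ts"
  have \<eta>: "0 < \<eta>" unfolding \<eta>_def using ts(1) a by (intro pos) auto
  define \<epsilon> where "\<epsilon> = min 1 (\<eta> / (K + 1))"
  have "0 < v \<mu> \<tau>" if \<mu>: "\<bar>\<mu> - \<mu>0\<bar> < \<epsilon>" and \<tau>: "0 < \<tau>" "\<tau> \<le> 1" for \<mu> \<tau>
  proof (cases "\<tau> \<le> a")
    case True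
    then show ?thesis using \<mu> \<tau> by (intro a(3)) (auto simp: \<Lambda>_def \<epsilon>_def)
  next
    case False
    have "K * \<bar>\<mu> - \<mu>0\<bar> \<le> K * (\<eta> / (K + 1))"
      using \<mu> K(1) by (intro mult_left_mono) (auto simp: \<epsilon>_def)
    also have "\<dots> < \<eta>" using K(1) \<eta> by (simp add: field_simps)
    moreover have "\<bar>\<mu>\<bar> \<le> \<Lambda>" using \<mu> unfolding \<Lambda>_def \<epsilon>_def by linarith
    ultimately have "\<bar>v \<mu> \<tau> - v \<mu>0 \<tau>\<bar> < \<eta>"
      using K(2)[of \<mu> \<mu>0 \<tau>] \<tau> by (force simp: \<Lambda>_def)
    moreover have "\<eta> \<le> v \<mu>0 \<tau>" unfolding \<eta>_def using False \<tau> by (intro ts(2)) auto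
    ultimately show ?thesis by linarith
  qed
  moreover have "0 < \<epsilon>" unfolding \<epsilon>_def using \<eta> K(1) by simp
  ultimately show ?thesis using that by blast
qed

lemma v_neg_open:
  assumes neg: "v \<mu>0 \<tau> < 0" and \<tau>: "\<tau> \<in> {0..1}"
  obtains \<epsilon> where "0 < \<epsilon>" "\<And>\<mu>. \<bar>\<mu> - \<mu>0\<bar> < \<epsilon> \<Longrightarrow> v \<mu> \<tau> < 0"
proof -
  define \<Lambda> where "\<Lambda> = \<bar>\<mu>0\<bar> + 1"
  obtain K where K: "0 \<le> K"
    "\<And>\<mu>1 \<mu>2 t. \<bar>\<mu>1\<bar> \<le> \<Lambda> \<Longrightarrow> \<bar>\<mu>2\<bar> \<le> \<Lambda> \<Longrightarrow> t \<in> {0..1} \<Longrightarrow> \<bar>v \<mu>1 t - v \<mu>2 t\<bar> \<le> K * \<bar>\<mu>1 - \<mu>2\<bar>"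
    using v_lipschitz_in_parameter by blast
  define \<epsilon> where "\<epsilon> = min 1 (- v \<mu>0 \<tau> / (K + 1))"
  have "v \<mu> \<tau> < 0" if \<mu>: "\<bar>\<mu> - \<mu>0\<bar> < \<epsilon>" for \<mu>
  proof -
    have "K * \<bar>\<mu> - \<mu>0\<bar> \<le> K * (- v \<mu>0 \<tau> / (K + 1))"
      using \<mu> K(1) by (intro mult_left_mono) (auto simp: \<epsilon>_def)
    also have "\<dots> < - v \<mu>0 \<tau>" using K(1) neg by (simp add: field_simps)
    moreover have "\<bar>\<mu>\<bar> \<le> \<Lambda>" using \<mu> unfolding \<Lambda>_def \<epsilon>_def by linarith
    ultimately show ?thesis using K(2)[of \<mu> \<mu>0 \<tau>] \<tau> by (force simp: \<Lambda>_def)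
  qed
  moreover have "0 < - v \<mu>0 \<tau> / (K + 1)" using neg K(1) by (intro divide_pos_pos) auto
  then have "0 < \<epsilon>" unfolding \<epsilon>_def by simp
  ultimately show ?thesis using that by blast
qed

text \<open>Shooting characterisation of the principal eigenvalue: \<open>lam1\<close> turns out to be \<open>lambda1 m\<close>
  (\<open>lambda1_eq_lam1\<close>), with eigenfunction \<open>phi = v lam1\<close>.\<close>
definition lam1 :: real where "lam1 = Inf {\<mu>. 0 \<le> \<mu> \<and> (\<exists>\<tau>\<in>{0<..1}. v \<mu> \<tau> \<le> 0)}"

lemma lam1_attained: "0 \<le> lam1" "\<exists>\<tau>\<in>{0<..1}. v lam1 \<tau> \<le> 0"
proof -
  define Z where "Z = {\<mu>. 0 \<le> \<mu> \<and> (\<exists>\<tau>\<in>{0<..1}. v \<mu> \<tau> \<le> 0)}"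
  have Z: "Z \<noteq> {}" "bdd_below Z"
    using v_has_zero_for_large_parameter unfolding Z_def by (force, auto intro: bdd_belowI[of _ 0])
  show "0 \<le> lam1" unfolding lam1_def Z_def[symmetric] using Z by (intro cInf_greatest) (auto simp: Z_def)
  show "\<exists>\<tau>\<in>{0<..1}. v lam1 \<tau> \<le> 0"
  proof (rule ccontr)
    assume "\<not> ?thesis"
    then obtain \<epsilon> where \<epsilon>: "0 < \<epsilon>" "\<And>\<mu> \<tau>. \<bar>\<mu> - lam1\<bar> < \<epsilon> \<Longrightarrow> 0 < \<tau> \<Longrightarrow> \<tau> \<le> 1 \<Longrightarrow> 0 < v \<mu> \<tau>"
      using v_pos_open[of lam1] by (metis greaterThanAtMost_iff not_le)
    have "Inf Z < lam1 + \<epsilon>" using \<epsilon>(1) unfolding lam1_def Z_def by simp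
    then obtain \<mu> where \<mu>: "\<mu> \<in> Z" "\<mu> < lam1 + \<epsilon>" using cInf_less_iff[OF Z] by blast
    have "lam1 \<le> \<mu>" unfolding lam1_def Z_def[symmetric] by (rule cInf_lower[OF \<mu>(1) Z(2)])
    then show False using \<mu> \<epsilon>(2)[of \<mu>] unfolding Z_def by fastforce
  qed
qed

lemma lam1_pos: "0 < lam1"
  using lam1_attained v_pos_if_nonpos[of lam1] by fastforce

lemma v_pos_below_lam1:
  assumes "\<mu> < lam1" "0 < \<tau>" "\<tau> \<le> 1"
  shows "0 < v \<mu> \<tau>"
proof (cases "\<mu> \<le> 0")
  case False
  have "\<not> (\<exists>\<tau>\<in>{0<..1}. v \<mu> \<tau> \<le> 0)"
  proof
    assume "\<exists>\<tau>\<in>{0<..1}. v \<mu> \<tau> \<le> 0"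
    then have "lam1 \<le> \<mu>"
      unfolding lam1_def using False by (intro cInf_lower) (auto intro: bdd_belowI[of _ 0])
    then show False using assms(1) by simp
  qed
  then show ?thesis using assms(2,3) by force
qed (use v_pos_if_nonpos assms in auto)

definition phi :: "real \<Rightarrow> real" where "phi = v lam1"
definition dphi :: "real \<Rightarrow> real" where "dphi = dv lam1"

lemma phi_0: "phi 0 = 0" and phi_cont: "continuous_on {0..1} phi"
  and phi_has_derivative: "t \<in> {0..1} \<Longrightarrow> (phi has_real_derivative dphi t) (at t within {0..1})"
  and dphi_has_derivative:
    "t \<in> {0..1} \<Longrightarrow> (dphi has_real_derivative - (lam1 * m t * phi t)) (at t within {0..1})"
  unfolding phi_def dphi_def by (fact v_0 v_cont v_has_derivative dv_has_derivative)+

lemma dphi_antimono: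
  assumes "\<And>t. t \<in> {0..T} \<Longrightarrow> 0 \<le> phi t" "0 \<le> x" "x \<le> y" "y \<le> T" "T \<le> 1"
  shows "dphi y \<le> dphi x"
  by (rule nonincreasing_within_Icc[OF dphi_has_derivative])
    (use assms m_nonneg lam1_pos in \<open>auto intro!: mult_nonneg_nonneg\<close>)

lemma phi_no_interior_zero:
  assumes T: "0 < T" "T < 1" and zero: "phi T = 0" and pos: "\<And>t. 0 < t \<Longrightarrow> t < T \<Longrightarrow> 0 < phi t"
  shows False
proof -
  have nonneg: "0 \<le> phi t" if "t \<in> {0..T}" for t
    using pos[of t] zero phi_0 that by (cases "t = 0"; cases "t = T") (auto simp: less_imp_le)
  have "dphi T < 0"
    by (rule derivative_neg_at_first_zero[OF phi_has_derivative dphi_antimono[OF nonneg] pos zero])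
      (use T in auto)
  moreover have "(phi has_real_derivative dphi T) (at T)"
    using phi_has_derivative[of T] at_within_01_eq_at[of T] T by auto
  ultimately obtain d where d: "0 < d" "\<And>h. 0 < h \<Longrightarrow> h < d \<Longrightarrow> phi (T + h) < phi T"
    using DERIV_neg_dec_right[of phi "dphi T" T] by blast
  define h where "h = min (d/2) ((1 - T)/2)"
  have h: "0 < h" "h < d" "h \<le> (1 - T)/2"
    unfolding h_def using T d min.cobounded2[of "d/2" "(1 - T)/2"] by auto
  define \<tau> where "\<tau> = T + h"
  have \<tau>: "\<tau> \<in> {0..1}" "0 < \<tau>" "v lam1 \<tau> < 0"
    using T h d(2)[of h] zero unfolding \<tau>_def phi_def by auto
  obtain \<epsilon> where \<epsilon>: "0 < \<epsilon>" "\<And>\<mu>. \<bar>\<mu> - lam1\<bar> < \<epsilon> \<Longrightarrow> v \<mu> \<tau> < 0"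
    using v_neg_open[OF \<tau>(3,1)] by blast
  have "v (lam1 - \<epsilon>/2) \<tau> < 0" using \<epsilon> by (intro \<epsilon>(2)) simp
  moreover have "0 < v (lam1 - \<epsilon>/2) \<tau>" using \<epsilon>(1) \<tau> by (intro v_pos_below_lam1) auto
  ultimately show False by simp
qed

lemma phi_1: "phi 1 = 0" and phi_pos: "0 < t \<Longrightarrow> t < 1 \<Longrightarrow> 0 < phi t"
proof -
  obtain \<tau> where \<tau>: "0 < \<tau>" "\<tau> \<le> 1" "phi \<tau> \<le> 0" using lam1_attained unfolding phi_def by auto
  obtain a where a: "0 < a" "a \<le> 1/2" "\<And>\<mu> t. \<bar>\<mu>\<bar> \<le> lam1 \<Longrightarrow> 0 < t \<Longrightarrow> t \<le> a \<Longrightarrow> 0 < v \<mu> t"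
    using v_pos_near_0 by blast
  obtain T where T: "a < T" "T \<le> \<tau>" "phi T = 0" "\<And>t. 0 < t \<Longrightarrow> t < T \<Longrightarrow> 0 < phi t"
    using first_zero_exists[OF phi_cont a(1) _ \<tau>] a(3)[of lam1] lam1_attained(1) unfolding phi_def by auto
  have "T = 1" using phi_no_interior_zero[of T] T a \<tau> by force
  then show "phi 1 = 0" "0 < t \<Longrightarrow> t < 1 \<Longrightarrow> 0 < phi t" using T by auto
qed

lemma phi_nonneg: "t \<in> {0..1} \<Longrightarrow> 0 \<le> phi t"
  using phi_pos[of t] phi_0 phi_1 by (cases "t = 0"; cases "t = 1") (auto simp: less_imp_le)

lemma dphi_1_neg: "dphi 1 < 0"
  by (rule derivative_neg_at_first_zero[OF phi_has_derivative dphi_antimono[OF phi_nonneg] phi_pos phi_1]) auto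

lemma lam1_is_eigenvalue: "is_dirichlet_eigenvalue m lam1"
  unfolding is_dirichlet_eigenvalue_def
proof (intro exI conjI)
  show "C2_on_open01 phi dphi (\<lambda>t. - linear_rhs lam1 t (phi t))"
    using ivp_solution_C2[OF continuous_linear_rhs ivp_solution_v] unfolding phi_def dphi_def dv_def .
  show "\<exists>t\<in>{0..1}. phi t \<noteq> 0" using phi_pos[of "1/2"] by (intro bexI[of _ "1/2"]) auto
qed (auto simp: phi_cont phi_0 phi_1 linear_rhs_def)

lemma lam1_le_eigenvalue:
  assumes "is_dirichlet_eigenvalue m \<mu>"
  shows "lam1 \<le> \<mu>"
proof (rule ccontr)
  assume "\<not> lam1 \<le> \<mu>"
  then have V_pos: "\<And>t. 0 < t \<Longrightarrow> t \<le> 1 \<Longrightarrow> 0 < v \<mu> t" using v_pos_below_lam1 by simp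
  obtain w w' w'' where w: "continuous_on {0..1} w" "w 0 = 0" "w 1 = 0" and w_nz: "\<exists>t\<in>{0..1}. w t \<noteq> 0"
    and dw: "\<And>t. t \<in> {0<..<1} \<Longrightarrow> (w has_real_derivative w' t) (at t)"
    and ddw0: "\<And>t. t \<in> {0<..<1} \<Longrightarrow> (w' has_real_derivative w'' t) (at t)"
    and eq: "\<And>t. t \<in> {0<..<1} \<Longrightarrow> - w'' t = \<mu> * m t * w t"
    using assms unfolding is_dirichlet_eigenvalue_def C2_on_open01_def by blast
  have ddw: "(w' has_real_derivative - (\<mu> * m t) * w t) (at t)" if "t \<in> {0<..<1}" for t
  proof -
    have "w'' t = - (\<mu> * m t) * w t" using eq[OF that] by (metis minus_minus mult_minus_left)
    then show ?thesis using ddw0[OF that] by simp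
  qed
  obtain c where c: "\<And>t. t \<in> {0<..<1} \<Longrightarrow> w' t * v \<mu> t - w t * dv \<mu> t = c"
    using wronskian_constant[OF dw ddw v_has_derivative_at] by blast
  obtain Bw where Bw: "\<And>t. t \<in> {0..1} \<Longrightarrow> \<bar>w t\<bar> \<le> Bw"
    using compact_imp_bounded[OF compact_continuous_image[OF w(1) compact_Icc]] by (force simp: bounded_iff)
  obtain BdV where BdV: "\<And>t. t \<in> {0..1} \<Longrightarrow> \<bar>dv \<mu> t\<bar> \<le> BdV"
    using compact_imp_bounded[OF compact_continuous_image[OF dv_cont compact_Icc]] by (force simp: bounded_iff)
  have "\<bar>- (\<mu> * m t) * w t\<bar> \<le> \<bar>\<mu>\<bar> * m_bound * Bw" if "t \<in> {0<..<1}" for t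
    using that m_nonneg[of t] m_le_m_bound[of t] Bw[of t] by (auto simp: abs_mult intro!: mult_mono)
  then have "c = 0"
    using derivative_bounded_if_second_derivative_bounded[OF ddw]
    by (intro wronskian_zero[OF w(1,2) _ v_cont v_0 _ c, of _ BdV]) (auto intro: BdV)
  then obtain k where k: "\<And>t. t \<in> {0<..<1} \<Longrightarrow> w t = k * v \<mu> t"
    using proportional_if_wronskian_zero[OF dw v_has_derivative_at(1)] V_pos c by (metis greaterThanLessThan_iff less_le_not_le)
  have cont: "continuous_on {0..1} (\<lambda>t. w t - k * v \<mu> t)" "continuous_on {0..1} (\<lambda>t. k * v \<mu> t - w t)"
    by (intro continuous_intros w(1) v_cont)+
  have "0 \<le> w 1 - k * v \<mu> 1" "0 \<le> k * v \<mu> 1 - w 1"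
    using ge_on_01_if_ge_on_open_01[OF cont(1), of 0 1] ge_on_01_if_ge_on_open_01[OF cont(2), of 0 1] k
    by auto
  then have "w 1 = k * v \<mu> 1" by simp
  then have "k = 0" using w(3) V_pos[of 1] by simp
  then have "w t = 0" if "t \<in> {0..1}" for t
    using k[of t] w that by (cases "t = 0 \<or> t = 1") auto
  then show False using w_nz by blast
qed

lemma lambda1_eq_lam1: "lambda1 m = lam1"
  unfolding lambda1_def by (rule cInf_eq_minimum) (use lam1_is_eigenvalue lam1_le_eigenvalue in auto)

end

section \<open>Shooting for a Lipschitz nonlinearity\<close>

context weight
begin

lemma integral_m_phi_nonneg: "0 \<le> integral {0..1} (\<lambda>t. m t * phi t)"
proof (rule integral_nonneg)
  show "(\<lambda>t. m t * phi t) integrable_on {0..1}"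
    by (intro integrable_on_subinterval_01 continuous_intros m_cont phi_cont) auto
qed (use m_nonneg phi_nonneg in simp)

lemma integral_m_phi_weighted_pos: "0 < integral {0..1} (\<lambda>t. m t * (t * (1 - t)) * phi t)"
proof -
  obtain c where c: "0 < c" "c < 1" "0 < m c" using m_pos_inside by blast
  show ?thesis
  proof (rule integral_pos_if_pos_at_point[where c=c])
    show "continuous_on {0..1} (\<lambda>t. m t * (t * (1 - t)) * phi t)"
      by (intro continuous_intros m_cont phi_cont)
  qed (use c phi_pos[of c] m_nonneg phi_nonneg in auto)
qed

text \<open>A priori bound for nonnegative shooting solutions with u(1) \<ge> 0 of u'' = -G(t,u) when
  \<open>\<beta> * m t * (x - R) \<le> G t x\<close> with \<open>lam1 < \<beta>\<close>: test the equation against \<open>phi\<close> and use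
  \<open>max u * t * (1 - t) \<le> u t\<close> (concavity).\<close>
definition apriori_bound :: "real \<Rightarrow> real \<Rightarrow> real" where
  "apriori_bound \<beta> R = \<beta> * R * integral {0..1} (\<lambda>t. m t * phi t)
     / ((\<beta> - lam1) * integral {0..1} (\<lambda>t. m t * (t * (1 - t)) * phi t))"

lemma apriori_bound_nonneg: "0 \<le> \<beta> \<Longrightarrow> 0 \<le> R \<Longrightarrow> lam1 < \<beta> \<Longrightarrow> 0 \<le> apriori_bound \<beta> R"
  unfolding apriori_bound_def using integral_m_phi_nonneg integral_m_phi_weighted_pos by simp

end

locale shooting = weight +
  fixes G :: "real \<Rightarrow> real \<Rightarrow> real" and L \<alpha> \<beta> \<delta> R Gmax :: real
  assumes G_cont: "continuous_on ({0..1} \<times> UNIV) (\<lambda>(t,x). G t x)"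
    and G_lipschitz: "\<And>t x y. t \<in> {0..1} \<Longrightarrow> \<bar>G t x - G t y\<bar> \<le> L * \<bar>x - y\<bar>" and L: "0 \<le> L"
    and G_nonneg: "\<And>t x. t \<in> {0..1} \<Longrightarrow> 0 \<le> G t x"
    and G_le_near_0: "\<And>t x. t \<in> {0..1} \<Longrightarrow> 0 \<le> x \<Longrightarrow> x \<le> \<delta> \<Longrightarrow> G t x \<le> \<alpha> * m t * x"
    and G_ge: "\<And>t x. t \<in> {0..1} \<Longrightarrow> 0 \<le> x \<Longrightarrow> \<beta> * m t * (x - R) \<le> G t x"
    and G_bounded: "\<And>t x. t \<in> {0..1} \<Longrightarrow> 0 \<le> x \<Longrightarrow> x \<le> apriori_bound \<beta> R \<Longrightarrow> G t x \<le> Gmax"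
    and \<alpha>: "\<alpha> < lam1" and \<beta>: "lam1 < \<beta>" and \<delta>: "0 < \<delta>" and R: "0 \<le> R"
begin

definition U :: "real \<Rightarrow> real \<Rightarrow> real" where "U s = (SOME u. ivp_solution G s u)"
definition dU :: "real \<Rightarrow> real \<Rightarrow> real" where "dU s = ivp_slope G s (U s)"

lemma ivp_solution_U: "ivp_solution G s (U s)"
proof -
  have "\<exists>u. ivp_solution G s u" by (rule ivp_solution_exists[OF G_cont G_lipschitz L])
  then show ?thesis unfolding U_def by (rule someI_ex)
qed

lemma U_cont: "continuous_on {0..1} (U s)"
  using ivp_solution_U unfolding ivp_solution_def by auto

lemma U_0: "U s 0 = 0"
  by (rule ivp_solution_0[OF ivp_solution_U])

lemma U_eq: "t \<in> {0..1} \<Longrightarrow> U s t = s * t - repeated_integral (\<lambda>\<tau>. G \<tau> (U s \<tau>)) t"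
  using ivp_solution_U unfolding ivp_solution_def by auto

lemma U_has_derivative: "t \<in> {0..1} \<Longrightarrow> (U s has_real_derivative dU s t) (at t within {0..1})"
  and dU_has_derivative: "t \<in> {0..1} \<Longrightarrow> (dU s has_real_derivative - G t (U s t)) (at t within {0..1})"
  using ivp_solution_has_derivative[OF G_cont ivp_solution_U] unfolding dU_def by auto

lemma G_U_cont: "continuous_on {0..1} (\<lambda>\<tau>. G \<tau> (U s \<tau>))"
  by (rule ivp_solution_continuous_rhs[OF G_cont ivp_solution_U])

lemma continuous_U_1: "continuous_on UNIV (\<lambda>s. U s 1)"
proof -
  have "\<bar>U s1 1 - U s2 1\<bar> \<le> exp (L + 1) * 2 * \<bar>s1 - s2\<bar>" for s1 s2
    using ivp_solution_stability[OF G_cont G_cont G_lipschitz L ivp_solution_U[of s1] ivp_solution_U[of s2], of 0 1]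
    by (simp add: algebra_simps)
  then have "(exp (L + 1) * 2)-lipschitz_on UNIV (\<lambda>s. U s 1)"
    by (intro lipschitz_onI) (auto simp: dist_real_def)
  then show ?thesis by (rule lipschitz_on_continuous_on)
qed

lemma dU_antimono: "0 \<le> x \<Longrightarrow> x \<le> y \<Longrightarrow> y \<le> 1 \<Longrightarrow> dU s y \<le> dU s x"
  by (rule nonincreasing_within_Icc[OF dU_has_derivative]) (use G_nonneg in auto)

lemma U_concave:
  "0 \<le> a \<Longrightarrow> a < x \<Longrightarrow> x < b \<Longrightarrow> b \<le> 1 \<Longrightarrow> (b - x) * U s a + (x - a) * U s b \<le> (b - a) * U s x"
  by (rule concave_within_Icc[OF U_has_derivative dU_antimono])

lemma U_le_slope:
  assumes t: "t \<in> {0..1}"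
  shows "U s t \<le> s * t"
proof -
  have "U s t - s * t \<le> U s 0 - s * 0"
  proof (rule nonincreasing_within_Icc[where f="\<lambda>t. U s t - s * t" and f'="\<lambda>t. dU s t - s"])
    show "((\<lambda>t. U s t - s * t) has_real_derivative dU s x - s) (at x within {0..1})" if "x \<in> {0..1}" for x
      using U_has_derivative[OF that] by (auto intro!: derivative_eq_intros)
    fix x assume "x \<in> {0..t}"
    then have "dU s x \<le> dU s 0" using t by (intro dU_antimono) auto
    then show "dU s x - s \<le> 0" by (simp add: dU_def)
  qed (use t in auto)
  then show ?thesis using U_0 by simp
qed

lemma U_pos_near_0:
  assumes s: "0 < s"
  obtains a where "0 < a" "a \<le> 1" "\<And>t. 0 < t \<Longrightarrow> t \<le> a \<Longrightarrow> 0 < U s t"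
proof -
  obtain B where B: "\<And>\<tau>. \<tau> \<in> {0..1} \<Longrightarrow> \<bar>G \<tau> (U s \<tau>)\<bar> \<le> B"
    using compact_imp_bounded[OF compact_continuous_image[OF G_U_cont compact_Icc]]
    by (force simp: bounded_iff)
  have B0: "0 \<le> B" using B[of 0] by auto
  define a where "a = min 1 (s / (2 * B + 1))"
  have a: "0 < a" "a \<le> 1" unfolding a_def using s B0 by auto
  have "B * a \<le> B * (s / (2 * B + 1))" unfolding a_def using B0 by (intro mult_left_mono) auto
  also have "\<dots> < s" using s B0 by (simp add: field_simps add_pos_nonneg)
  finally have Ba: "B * a < s" .
  have "0 < U s t" if t: "0 < t" "t \<le> a" for t
  proof -
    have t1: "t \<in> {0..1}" using t a by auto
    have "\<bar>repeated_integral (\<lambda>\<tau>. G \<tau> (U s \<tau>)) t\<bar> \<le> B * t\<^sup>2"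
      by (rule abs_repeated_integral_le_square[OF G_U_cont t1]) (use B t1 in auto)
    then have "t * (s - B * t) \<le> U s t" using U_eq[OF t1, of s] by (simp add: power2_eq_square algebra_simps)
    moreover have "B * t < s" using Ba t B0 by (smt (verit) mult_left_mono)
    ultimately show ?thesis using t by (smt (verit) mult_pos_pos)
  qed
  then show ?thesis using that a by blast
qed

lemma integral_U_phi:
  assumes T: "0 \<le> T" "T \<le> 1"
  shows "integral {0..T} (\<lambda>t. U s t * (lam1 * m t * phi t) - G t (U s t) * phi t)
    = dU s T * phi T - U s T * dphi T"
  using lagrange_identity_has_integral[OF U_has_derivative dU_has_derivative phi_has_derivative
      dphi_has_derivative, of 0 T] T U_0 phi_0
  by (simp add: integral_unique)

lemma integrable_U_phi:
  "0 \<le> T \<Longrightarrow> T \<le> 1 \<Longrightarrow> (\<lambda>t. U s t * (lam1 * m t * phi t) - G t (U s t) * phi t) integrable_on {0..T}"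
  by (intro integrable_on_subinterval_01 continuous_intros U_cont m_cont phi_cont G_U_cont) auto

lemma U_nonneg:
  assumes "0 \<le> U s 1" "t \<in> {0..1}"
  shows "0 \<le> U s t"
proof (cases "t = 0 \<or> t = 1")
  case False
  then have t: "0 < t" "t < 1" using assms by auto
  have "(1 - t) * U s 0 + (t - 0) * U s 1 \<le> (1 - 0) * U s t" by (rule U_concave) (use t in auto)
  then have "t * U s 1 \<le> U s t" using U_0 by simp
  moreover have "0 \<le> t * U s 1" using t assms(1) by simp
  ultimately show ?thesis by linarith
qed (use assms U_0 in auto)

lemma U_ge_max_times_bump:
  assumes U1: "0 \<le> U s 1" and ts: "ts \<in> {0..1}" and max: "\<And>t. t \<in> {0..1} \<Longrightarrow> U s t \<le> U s ts"
    and t: "t \<in> {0..1}"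
  shows "U s ts * (t * (1 - t)) \<le> U s t"
proof -
  have M: "0 \<le> U s ts" and Ut: "0 \<le> U s t" using U_nonneg[OF U1] ts t by auto
  have bump: "t * (1 - t) \<le> t * 1" "t * (1 - t) \<le> 1 * (1 - t)"
    using t by (intro mult_left_mono mult_right_mono; simp)+
  consider "t = ts" | "0 < t" "t < ts" | "ts < t" "t < 1" | "t = 0 \<or> t = 1" using t by fastforce
  then show ?thesis
  proof cases
    case 1
    have "U s ts * (t * (1 - t)) \<le> U s ts * 1" using M bump t by (intro mult_left_mono) auto
    then show ?thesis using 1 by simp
  next
    case 2
    have "(ts - t) * U s 0 + (t - 0) * U s ts \<le> (ts - 0) * U s t" using 2 ts by (intro U_concave) auto
    then have "t * U s ts \<le> ts * U s t" using U_0 by simp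
    also have "\<dots> \<le> 1 * U s t" using ts Ut by (intro mult_right_mono) auto
    finally have "U s ts * t \<le> U s t" by (simp add: mult.commute)
    moreover have "U s ts * (t * (1 - t)) \<le> U s ts * t" using M bump by (intro mult_left_mono) auto
    ultimately show ?thesis by linarith
  next
    case 3
    have "(1 - t) * U s ts + (t - ts) * U s 1 \<le> (1 - ts) * U s t" using 3 ts by (intro U_concave) auto
    moreover have "0 \<le> (t - ts) * U s 1" using 3 U1 by simp
    ultimately have "(1 - t) * U s ts \<le> (1 - ts) * U s t" by linarith
    also have "\<dots> \<le> 1 * U s t" using ts Ut by (intro mult_right_mono) auto
    finally have "U s ts * (1 - t) \<le> U s t" by (simp add: mult.commute)
    moreover have "U s ts * (t * (1 - t)) \<le> U s ts * (1 - t)" using M bump by (intro mult_left_mono) auto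
    ultimately show ?thesis by linarith
  next
    case 4
    then show ?thesis using Ut by auto
  qed
qed

lemma integral_m_U_phi_le:
  assumes U1: "0 \<le> U s 1"
  shows "(\<beta> - lam1) * integral {0..1} (\<lambda>t. m t * U s t * phi t) \<le> \<beta> * R * integral {0..1} (\<lambda>t. m t * phi t)"
proof -
  have int: "f integrable_on {0..1}" if "continuous_on {0..1} f" for f :: "real \<Rightarrow> real"
    using integrable_on_subinterval_01[OF that] by simp
  have "0 \<le> - U s 1 * dphi 1" using U1 dphi_1_neg by (simp add: mult_nonneg_nonpos)
  also have "\<dots> = integral {0..1} (\<lambda>t. U s t * (lam1 * m t * phi t) - G t (U s t) * phi t)"
    using integral_U_phi[of 1 s] phi_1 by simp
  also have "\<dots> \<le> integral {0..1} (\<lambda>t. (lam1 - \<beta>) * (m t * U s t * phi t) + (\<beta> * R) * (m t * phi t))"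
  proof (rule integral_le)
    fix t :: real assume t: "t \<in> {0..1}"
    have "\<beta> * m t * (U s t - R) * phi t \<le> G t (U s t) * phi t"
      using G_ge[OF t U_nonneg[OF U1 t]] phi_nonneg[OF t] by (rule mult_right_mono)
    then show "U s t * (lam1 * m t * phi t) - G t (U s t) * phi t
        \<le> (lam1 - \<beta>) * (m t * U s t * phi t) + (\<beta> * R) * (m t * phi t)"
      by (simp add: algebra_simps)
  qed (use integrable_U_phi[of 1 s] in \<open>auto intro!: int continuous_intros U_cont m_cont phi_cont\<close>)
  also have "\<dots> = (lam1 - \<beta>) * integral {0..1} (\<lambda>t. m t * U s t * phi t) + (\<beta> * R) * integral {0..1} (\<lambda>t. m t * phi t)"
    by (subst integral_add) (auto intro!: int continuous_intros U_cont m_cont phi_cont)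
  finally show ?thesis by (simp add: algebra_simps)
qed

lemma U_le_apriori_bound:
  assumes U1: "0 \<le> U s 1" and t: "t \<in> {0..1}"
  shows "U s t \<le> apriori_bound \<beta> R"
proof -
  have "\<exists>x\<in>{0..1}. \<forall>y\<in>{0..1}. U s y \<le> U s x"
    by (rule continuous_attains_sup[OF compact_Icc _ U_cont]) simp
  then obtain ts where ts: "ts \<in> {0..1}" "\<And>t. t \<in> {0..1} \<Longrightarrow> U s t \<le> U s ts" by blast
  define I where "I = integral {0..1} (\<lambda>t. m t * U s t * phi t)"
  define Jw where "Jw = integral {0..1} (\<lambda>t. m t * (t * (1 - t)) * phi t)"
  have "U s ts * Jw = integral {0..1} (\<lambda>t. U s ts * (m t * (t * (1 - t)) * phi t))" unfolding Jw_def by simp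
  also have "\<dots> \<le> I" unfolding I_def
  proof (rule integral_le)
    fix t :: real assume t: "t \<in> {0..1}"
    have "U s ts * (t * (1 - t)) * (m t * phi t) \<le> U s t * (m t * phi t)"
      using U_ge_max_times_bump[OF U1 ts t] m_nonneg[OF t] phi_nonneg[OF t] by (intro mult_right_mono) auto
    then show "U s ts * (m t * (t * (1 - t)) * phi t) \<le> m t * U s t * phi t" by (simp add: algebra_simps)
  qed (auto intro!: integrable_on_subinterval_01[of _ 0 1, simplified] continuous_intros U_cont m_cont phi_cont)
  finally have "(\<beta> - lam1) * (U s ts * Jw) \<le> (\<beta> - lam1) * I" using \<beta> by (intro mult_left_mono) auto
  then have "(\<beta> - lam1) * (U s ts * Jw) \<le> \<beta> * R * integral {0..1} (\<lambda>t. m t * phi t)"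
    using integral_m_U_phi_le[OF U1] unfolding I_def by linarith
  then have "U s ts \<le> apriori_bound \<beta> R"
    using \<beta> integral_m_phi_weighted_pos unfolding apriori_bound_def Jw_def by (simp add: field_simps)
  then show ?thesis using ts(2)[OF t] by simp
qed

lemma slope_bound:
  assumes U1: "0 \<le> U s 1"
  shows "s \<le> 2 * apriori_bound \<beta> R + Gmax / 2"
proof -
  have h: "(1/2::real) \<in> {0..1}" by simp
  have "\<bar>repeated_integral (\<lambda>\<tau>. G \<tau> (U s \<tau>)) (1/2)\<bar> \<le> Gmax * (1/2)\<^sup>2"
    by (rule abs_repeated_integral_le_square[OF G_U_cont h])
      (use G_nonneg G_bounded U_nonneg[OF U1] U_le_apriori_bound[OF U1] in auto)
  then show ?thesis using U_eq[OF h, of s] U_le_apriori_bound[OF U1 h] by (simp add: power2_eq_square)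
qed

text \<open>Otherwise testing the equation against \<open>phi\<close> gives \<open>(lam1 - \<alpha>) * \<integral> m U phi \<le> 0\<close>.\<close>
lemma solution_exceeds_delta:
  assumes U1: "U s 1 = 0" and pos: "\<And>t. 0 < t \<Longrightarrow> t < 1 \<Longrightarrow> 0 < U s t"
  obtains t where "t \<in> {0..1}" "\<delta> < U s t"
proof (rule ccontr)
  assume "\<not> thesis"
  then have small: "\<And>t. t \<in> {0..1} \<Longrightarrow> U s t \<le> \<delta>" using that by force
  obtain c where c: "0 < c" "c < 1" "0 < m c" using m_pos_inside by blast
  have "0 < integral {0..1} (\<lambda>t. (lam1 - \<alpha>) * (m t * U s t * phi t))"
  proof (rule integral_pos_if_pos_at_point[where c=c])
    show "continuous_on {0..1} (\<lambda>t. (lam1 - \<alpha>) * (m t * U s t * phi t))"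
      by (intro continuous_intros m_cont U_cont phi_cont)
    show "0 \<le> (lam1 - \<alpha>) * (m t * U s t * phi t)" if "t \<in> {0..1}" for t
      using \<alpha> m_nonneg[OF that] U_nonneg[of s t] U1 that phi_nonneg[OF that] by simp
    show "0 < (lam1 - \<alpha>) * (m c * U s c * phi c)" using \<alpha> c pos[of c] phi_pos[of c] by simp
  qed (use c in auto)
  also have "\<dots> \<le> integral {0..1} (\<lambda>t. U s t * (lam1 * m t * phi t) - G t (U s t) * phi t)"
  proof (rule integral_le)
    fix t :: real assume t: "t \<in> {0..1}"
    have "G t (U s t) * phi t \<le> (\<alpha> * m t * U s t) * phi t"
      using G_le_near_0[OF t U_nonneg[of s t] small[OF t]] U1 t phi_nonneg[OF t] by (simp add: mult_right_mono)
    then show "(lam1 - \<alpha>) * (m t * U s t * phi t) \<le> U s t * (lam1 * m t * phi t) - G t (U s t) * phi t"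
      by (simp add: algebra_simps)
  qed (use integrable_U_phi[of 1 s] in \<open>auto intro!: integrable_on_subinterval_01 continuous_intros m_cont U_cont phi_cont\<close>)
  also have "\<dots> = 0" using integral_U_phi[of 1 s] U1 phi_1 by simp
  finally show False by simp
qed

lemma U_1_pos_at_delta: "0 < U \<delta> 1"
proof (rule ccontr)
  assume "\<not> 0 < U \<delta> 1"
  obtain a where a: "0 < a" "a \<le> 1" "\<And>t. 0 < t \<Longrightarrow> t \<le> a \<Longrightarrow> 0 < U \<delta> t"
    using U_pos_near_0[OF \<delta>] by blast
  obtain T where T: "a < T" "T \<le> 1" "U \<delta> T = 0" "\<And>t. 0 < t \<Longrightarrow> t < T \<Longrightarrow> 0 < U \<delta> t"
    using first_zero_exists[OF U_cont a(1) a(3), of 1] \<open>\<not> 0 < U \<delta> 1\<close> by auto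
  have nonneg: "0 \<le> U \<delta> t" if "t \<in> {0..T}" for t
    using T(3) T(4)[of t] U_0 that by (cases "t = 0"; cases "t = T") (auto simp: less_imp_le)
  have small: "U \<delta> t \<le> \<delta>" if "t \<in> {0..1}" for t
  proof -
    have "\<delta> * t \<le> \<delta> * 1" using that \<delta> by (intro mult_left_mono) auto
    then show ?thesis using U_le_slope[OF that, of \<delta>] by simp
  qed
  have "dU \<delta> T < 0"
    by (rule derivative_neg_at_first_zero[OF U_has_derivative dU_antimono T(4,3)]) (use a T in auto)
  have "0 \<le> integral {0..T} (\<lambda>t. U \<delta> t * (lam1 * m t * phi t) - G t (U \<delta> t) * phi t)"
  proof (rule integral_nonneg)
    fix t :: real assume t: "t \<in> {0..T}"
    then have t1: "t \<in> {0..1}" using T by auto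
    have "G t (U \<delta> t) * phi t \<le> (\<alpha> * m t * U \<delta> t) * phi t"
      using G_le_near_0[OF t1 nonneg[OF t] small[OF t1]] phi_nonneg[OF t1] by (rule mult_right_mono)
    also have "\<dots> \<le> (lam1 * m t * U \<delta> t) * phi t"
      using \<alpha> m_nonneg[OF t1] nonneg[OF t] phi_nonneg[OF t1] by (intro mult_right_mono) auto
    finally show "0 \<le> U \<delta> t * (lam1 * m t * phi t) - G t (U \<delta> t) * phi t" by (simp add: algebra_simps)
  qed (use integrable_U_phi T a in auto)
  also have "\<dots> = dU \<delta> T * phi T" using integral_U_phi[of T \<delta>] T a by simp
  finally have "0 \<le> dU \<delta> T * phi T" .
  moreover have "T = 1"
  proof (rule ccontr)
    assume "T \<noteq> 1"
    then have "0 < phi T" using phi_pos[of T] T a by simp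
    then show False using mult_neg_pos[OF \<open>dU \<delta> T < 0\<close>] \<open>0 \<le> dU \<delta> T * phi T\<close> by fastforce
  qed
  ultimately obtain t where "t \<in> {0..1}" "\<delta> < U \<delta> t"
    using solution_exceeds_delta[of \<delta>] T by auto
  then show False using small by fastforce
qed

theorem shooting_solution_exists:
  obtains s where "\<delta> \<le> s" "s \<le> 2 * apriori_bound \<beta> R + Gmax / 2 + 1"
    "U s 1 = 0" "\<And>t. 0 < t \<Longrightarrow> t < 1 \<Longrightarrow> 0 < U s t"
    "\<And>t. t \<in> {0..1} \<Longrightarrow> 0 \<le> U s t \<and> U s t \<le> apriori_bound \<beta> R" "\<exists>t\<in>{0..1}. \<delta> < U s t"
proof -
  define S where "S = 2 * apriori_bound \<beta> R + Gmax / 2 + 1"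
  have "\<delta> \<le> S - 1" unfolding S_def using slope_bound[of \<delta>] U_1_pos_at_delta by simp
  moreover have "U S 1 < 0" using slope_bound[of S] unfolding S_def by fastforce
  ultimately have "\<exists>s\<ge>\<delta>. s \<le> S \<and> U s 1 = 0"
    using U_1_pos_at_delta by (intro IVT2'[of "\<lambda>s. U s 1"] continuous_on_subset[OF continuous_U_1]) auto
  then obtain s where s: "\<delta> \<le> s" "s \<le> S" "U s 1 = 0" by blast
  have "0 < s" using s \<delta> by simp
  then obtain a where a: "0 < a" "a \<le> 1" "\<And>t. 0 < t \<Longrightarrow> t \<le> a \<Longrightarrow> 0 < U s t"
    using U_pos_near_0 by blast
  have pos: "\<And>t. 0 < t \<Longrightarrow> t < 1 \<Longrightarrow> 0 < U s t"
    using ivp_solution_pos_inside[OF G_cont G_nonneg ivp_solution_U s(3), of a] a by auto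
  show ?thesis
  proof (rule that[OF s(1) _ s(3) pos])
    show "s \<le> 2 * apriori_bound \<beta> R + Gmax / 2 + 1" using s S_def by simp
    show "\<And>t. t \<in> {0..1} \<Longrightarrow> 0 \<le> U s t \<and> U s t \<le> apriori_bound \<beta> R"
      using U_nonneg U_le_apriori_bound s(3) by simp
    show "\<exists>t\<in>{0..1}. \<delta> < U s t" using solution_exceeds_delta[OF s(3) pos] by blast
  qed
qed

end

section \<open>Passing to the limit in a sequence of shooting solutions\<close>

lemma ivp_solution_lipschitz:
  assumes G: "continuous_on ({0..1} \<times> UNIV) (\<lambda>(t,x). G t x)" and u: "ivp_solution G s u"
    and G_range: "\<And>t. t \<in> {0..1} \<Longrightarrow> 0 \<le> G t (u t) \<and> G t (u t) \<le> Gm"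
    and s: "0 \<le> s" "s \<le> S" and t: "t1 \<in> {0..1}" "t2 \<in> {0..1}"
  shows "\<bar>u t1 - u t2\<bar> \<le> (S + Gm) * \<bar>t1 - t2\<bar>"
proof -
  note g = ivp_solution_continuous_rhs[OF G u]
  have slope: "\<bar>ivp_slope G s u x\<bar> \<le> S + Gm" if x: "x \<in> {0..1}" for x
  proof -
    have int: "(\<lambda>\<tau>. G \<tau> (u \<tau>)) integrable_on {0..x}" using x by (intro integrable_on_subinterval_01[OF g]) auto
    have "0 \<le> integral {0..x} (\<lambda>\<tau>. G \<tau> (u \<tau>))" using x G_range by (intro integral_nonneg[OF int]) auto
    moreover have "integral {0..x} (\<lambda>\<tau>. G \<tau> (u \<tau>)) \<le> integral {0..x} (\<lambda>_. Gm)"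
      using x G_range by (intro integral_le[OF int]) auto
    moreover have "integral {0..x} (\<lambda>_. Gm) \<le> Gm" using x G_range[of 0] by (simp add: mult_left_le_one_le)
    ultimately show ?thesis using s unfolding ivp_slope_def by linarith
  qed
  have "\<bar>u b - u a\<bar> \<le> (S + Gm) * (b - a)" if ab: "0 \<le> a" "a \<le> b" "b \<le> 1" for a b
  proof (cases "a = b")
    case False
    then obtain x where x: "x \<in> {a<..<b}" "u b - u a = ivp_slope G s u x * (b - a)"
      using mvt_within_Icc[OF ivp_solution_has_derivative(1)[OF G u], of a b] ab by auto
    then show ?thesis using slope[of x] ab by (auto simp: abs_mult intro!: mult_right_mono)
  qed simp
  then show ?thesis using t by (cases "t1 \<le> t2") (force simp: abs_minus_commute)+
qed

lemma uniformly_convergent_subsequence_01: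
  fixes u :: "nat \<Rightarrow> real \<Rightarrow> real"
  assumes bounded: "\<And>j t. t \<in> {0..1} \<Longrightarrow> \<bar>u j t\<bar> \<le> B"
    and lipschitz: "\<And>j t1 t2. t1 \<in> {0..1} \<Longrightarrow> t2 \<in> {0..1} \<Longrightarrow> \<bar>u j t1 - u j t2\<bar> \<le> K * \<bar>t1 - t2\<bar>"
  obtains w k where "continuous_on {0..1} w" "strict_mono (k :: nat \<Rightarrow> nat)"
    "\<And>e. 0 < e \<Longrightarrow> \<exists>N. \<forall>n\<ge>N. \<forall>t\<in>{0..1}. \<bar>u (k n) t - w t\<bar> < e"
proof -
  have K: "0 \<le> K" using lipschitz[of 0 1 0] by simp
  obtain w k where "continuous_on {0..1} w" "strict_mono (k :: nat \<Rightarrow> nat)"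
    "\<And>e. 0 < e \<Longrightarrow> \<exists>N. \<forall>n x. n \<ge> N \<and> x \<in> {0..1} \<longrightarrow> norm (u (k n) x - w x) < e"
  proof (rule Arzela_Ascoli[of "{0..1::real}" u B])
    fix x e :: real assume x: "x \<in> {0..1}" and e: "0 < e"
    show "\<exists>d>0. \<forall>n y. y \<in> {0..1} \<and> norm (x - y) < d \<longrightarrow> norm (u n x - u n y) < e"
    proof (intro exI[of _ "e / (K + 1)"] conjI allI impI)
      fix n y assume y: "y \<in> {0..1} \<and> norm (x - y) < e / (K + 1)"
      have "\<bar>u n x - u n y\<bar> \<le> (K + 1) * \<bar>x - y\<bar>"
        using lipschitz[of x y n] x y by (smt (verit) mult_right_mono abs_ge_zero)
      also have "\<dots> < (K + 1) * (e / (K + 1))" using y K by (intro mult_strict_left_mono) auto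
      finally show "norm (u n x - u n y) < e" using K by simp
    qed (use e K in simp)
  qed (use bounded in auto)
  then show ?thesis using that by (metis real_norm_def)
qed

lemma repeated_integral_uniform_limit:
  fixes g :: "nat \<Rightarrow> real \<Rightarrow> real"
  assumes g: "\<And>j. continuous_on {0..1} (g j)" "continuous_on {0..1} g0"
    and lim: "\<And>e. 0 < e \<Longrightarrow> \<exists>J. \<forall>j\<ge>J. \<forall>\<tau>\<in>{0..1}. \<bar>g j \<tau> - g0 \<tau>\<bar> \<le> e"
    and x: "x \<in> {0..1}"
  shows "(\<lambda>j. repeated_integral (g j) x) \<longlonglongrightarrow> repeated_integral g0 x"
proof (rule LIMSEQ_I)
  fix r :: real assume "0 < r"
  then have "0 < r / 2" by simp
  from lim[OF this] obtain J where J: "\<And>j \<tau>. J \<le> j \<Longrightarrow> \<tau> \<in> {0..1} \<Longrightarrow> \<bar>g j \<tau> - g0 \<tau>\<bar> \<le> r / 2"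
    by blast
  have "\<bar>repeated_integral (g j) x - repeated_integral g0 x\<bar> \<le> r / 2" if "J \<le> j" for j
    using abs_repeated_integral_le[of "\<lambda>\<tau>. g j \<tau> - g0 \<tau>" x "r / 2"] J[OF that] x
      repeated_integral_diff[OF g(1) g(2) x]
    by (auto intro!: continuous_intros g)
  then show "\<exists>J. \<forall>j\<ge>J. norm (repeated_integral (g j) x - repeated_integral g0 x) < r"
    using \<open>0 < r\<close> by (intro exI[of _ J]) force
qed

lemma dirichlet_solution_limit:
  fixes u g :: "nat \<Rightarrow> real \<Rightarrow> real"
  assumes g: "\<And>j. continuous_on {0..1} (g j)" "continuous_on {0..1} g0"
    and g_lim: "\<And>e. 0 < e \<Longrightarrow> \<exists>J. \<forall>j\<ge>J. \<forall>\<tau>\<in>{0..1}. \<bar>g j \<tau> - g0 \<tau>\<bar> \<le> e"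
    and u: "\<And>j t. t \<in> {0..1} \<Longrightarrow> u j t = s j * t - repeated_integral (g j) t" "\<And>j. u j 1 = 0"
    and u_lim: "\<And>t. t \<in> {0..1} \<Longrightarrow> (\<lambda>j. u j t) \<longlonglongrightarrow> w t"
    and t: "t \<in> {0..1}"
  shows "w t = repeated_integral g0 1 * t - repeated_integral g0 t"
proof -
  have "u j t = repeated_integral (g j) 1 * t - repeated_integral (g j) t" for j
    using u(1)[OF t, of j] u(1)[of 1 j] u(2)[of j] by simp
  then have "(\<lambda>j. u j t) \<longlonglongrightarrow> repeated_integral g0 1 * t - repeated_integral g0 t"
    using t by (auto intro!: tendsto_intros repeated_integral_uniform_limit[OF g g_lim])
  then show ?thesis using LIMSEQ_unique u_lim[OF t] by blast
qed

section \<open>Piecewise linear interpolation\<close>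

definition hat :: "nat \<Rightarrow> real \<Rightarrow> real" where "hat k y = max 0 (1 - \<bar>y - real k\<bar>)"

lemma hat_nonneg: "0 \<le> hat k y"
  unfolding hat_def by simp

lemma hat_eq_0: "1 \<le> \<bar>y - real k\<bar> \<Longrightarrow> hat k y = 0"
  unfolding hat_def by simp

lemma hat_nonzero_imp: "hat k y \<noteq> 0 \<Longrightarrow> \<bar>y - real k\<bar> < 1"
  unfolding hat_def by (auto simp: max_def split: if_splits)

lemma hat_lipschitz: "\<bar>hat k y - hat k y'\<bar> \<le> \<bar>y - y'\<bar>"
  unfolding hat_def by (auto simp: max_def abs_if split: if_splits)

lemma continuous_on_hat [continuous_intros]: "continuous_on S f \<Longrightarrow> continuous_on S (\<lambda>p. hat k (f p))"
  unfolding hat_def by (intro continuous_intros)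

lemma sum_hat_at_grid:
  assumes "j \<le> M"
  shows "(\<Sum>k=0..M. hat k (real j) * f k) = f j"
proof -
  have "(\<Sum>k=0..M. hat k (real j) * f k) = (\<Sum>k\<in>{j}. hat k (real j) * f k)"
    by (rule sum.mono_neutral_right) (use assms in \<open>auto intro!: hat_eq_0\<close>)
  then show ?thesis unfolding hat_def by simp
qed

lemma sum_hat_affine:
  fixes y a b :: real and M :: nat
  assumes y: "0 \<le> y" "y \<le> real M"
  shows "(\<Sum>k=0..M. hat k y * (a + b * real k)) = a + b * y"
proof -
  define j where "j = nat \<lfloor>y\<rfloor>"
  have jy: "real j \<le> y" "y < real j + 1" unfolding j_def using y by linarith+
  show ?thesis
  proof (cases "j < M")
    case True
    have "(\<Sum>k=0..M. hat k y * (a + b * real k)) = (\<Sum>k\<in>{j, Suc j}. hat k y * (a + b * real k))"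
    proof (rule sum.mono_neutral_right)
      show "\<forall>k\<in>{0..M} - {j, Suc j}. hat k y * (a + b * real k) = 0"
      proof
        fix k assume "k \<in> {0..M} - {j, Suc j}"
        then have "k < j \<or> j + 2 \<le> k" by auto
        then have "1 \<le> \<bar>y - real k\<bar>" using jy by (auto simp flip: of_nat_add)
        then show "hat k y * (a + b * real k) = 0" by (simp add: hat_eq_0)
      qed
    qed (use True in auto)
    also have "\<dots> = hat j y * (a + b * real j) + hat (Suc j) y * (a + b * real (Suc j))" by simp
    also have "hat j y = 1 - (y - real j)" unfolding hat_def using jy by auto
    also have "hat (Suc j) y = y - real j" unfolding hat_def using jy by auto
    finally show ?thesis by (simp add: algebra_simps)
  next
    case False
    then have "y = real M" using jy y by linarith
    then show ?thesis using sum_hat_at_grid[of M M "\<lambda>k. a + b * real k"] by simp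
  qed
qed

lemma sum_hat_mono:
  assumes "\<And>k. k \<le> M \<Longrightarrow> hat k y \<noteq> 0 \<Longrightarrow> f k \<le> g k"
  shows "(\<Sum>k=0..M. hat k y * f k) \<le> (\<Sum>k=0..M. hat k y * g k)"
proof (rule sum_mono)
  fix k assume "k \<in> {0..M}"
  then show "hat k y * f k \<le> hat k y * g k"
    using assms[of k] hat_nonneg[of k y] by (cases "hat k y = 0") (auto intro: mult_left_mono)
qed

lemma sum_hat_close:
  fixes y :: real
  assumes "\<And>k. k \<le> M \<Longrightarrow> hat k y \<noteq> 0 \<Longrightarrow> \<bar>f k - z\<bar> \<le> e" "0 \<le> y" "y \<le> real M"
  shows "\<bar>(\<Sum>k=0..M. hat k y * f k) - z\<bar> \<le> e"
proof -
  have "(\<Sum>k=0..M. hat k y * f k) \<le> (\<Sum>k=0..M. hat k y * ((z + e) + 0 * real k))"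
    by (rule sum_hat_mono) (use assms(1) in force)
  also have "\<dots> = z + e" using sum_hat_affine[OF assms(2,3), of "z + e" 0] by simp
  finally have upper: "(\<Sum>k=0..M. hat k y * f k) \<le> z + e" .
  have "z - e = (\<Sum>k=0..M. hat k y * ((z - e) + 0 * real k))"
    using sum_hat_affine[OF assms(2,3), of "z - e" 0] by simp
  also have "\<dots> \<le> (\<Sum>k=0..M. hat k y * f k)"
    by (rule sum_hat_mono) (use assms(1) in force)
  finally show ?thesis using upper by linarith
qed

lemma sum_hat_lipschitz:
  assumes "\<And>k. k \<le> M \<Longrightarrow> \<bar>f k\<bar> \<le> A"
  shows "\<bar>(\<Sum>k=0..M. hat k y * f k) - (\<Sum>k=0..M. hat k y' * f k)\<bar> \<le> (real M + 1) * A * \<bar>y - y'\<bar>"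
proof -
  have "\<bar>(\<Sum>k=0..M. hat k y * f k) - (\<Sum>k=0..M. hat k y' * f k)\<bar> = \<bar>\<Sum>k=0..M. (hat k y - hat k y') * f k\<bar>"
    by (simp add: sum_subtractf[symmetric] algebra_simps)
  also have "\<dots> \<le> (\<Sum>k=0..M. \<bar>y - y'\<bar> * A)"
    by (rule order.trans[OF sum_abs sum_mono]) (use assms hat_lipschitz in \<open>auto simp: abs_mult intro: mult_mono\<close>)
  finally show ?thesis by (simp add: algebra_simps)
qed

lemma grid_point_le: "k \<le> n * X \<Longrightarrow> real k / real n \<le> real X"
  by (cases "n = 0") (auto simp: field_simps simp flip: of_nat_mult)

lemma grid_point_near:
  assumes "hat k (real n * x) \<noteq> 0" "0 < n"
  shows "\<bar>real k / real n - x\<bar> < 1 / real n"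
proof -
  have "\<bar>real k / real n - x\<bar> = \<bar>real n * x - real k\<bar> / real n"
    using assms(2) by (simp add: field_simps abs_divide abs_minus_commute)
  then show ?thesis using hat_nonzero_imp[OF assms(1)] assms(2) by (simp add: divide_strict_right_mono)
qed

section \<open>Existence for a continuous nonlinearity crossing the principal eigenvalue\<close>

text \<open>F is approximated by nonlinearities that are piecewise linear in x on [0, X] (interpolating F
  on the grid k/n) and linear beyond X; these are Lipschitz and satisfy the hypotheses of
  \<open>shooting\<close> with the same constants, up to R + 1 and \<open>\<delta>/2\<close>.\<close>
locale crossing = weight +
  fixes F :: "real \<Rightarrow> real \<Rightarrow> real" and \<alpha> \<beta> \<delta> R :: real
  assumes F_cont: "continuous_on ({0..1} \<times> {0..}) (\<lambda>(t,x). F t x)"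
    and F_nonneg: "\<And>t x. t \<in> {0..1} \<Longrightarrow> 0 \<le> x \<Longrightarrow> 0 \<le> F t x"
    and F_le_near_0: "\<And>t x. t \<in> {0..1} \<Longrightarrow> 0 \<le> x \<Longrightarrow> x < \<delta> \<Longrightarrow> F t x \<le> \<alpha> * m t * x"
    and F_ge_far: "\<And>t x. t \<in> {0..1} \<Longrightarrow> R \<le> x \<Longrightarrow> \<beta> * m t * x \<le> F t x"
    and \<alpha>: "\<alpha> < lam1" and \<beta>: "lam1 < \<beta>" and \<delta>: "0 < \<delta>" "\<delta> < R"
begin

definition bound :: real where "bound = apriori_bound \<beta> (R + 1)"

definition X :: nat where "X = nat \<lceil>bound + R + 1\<rceil> + 1"

lemma bound_nonneg: "0 \<le> bound"
  unfolding bound_def using apriori_bound_nonneg[of \<beta> "R + 1"] \<beta> \<delta> lam1_pos by simp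

lemma X_bounds: "0 < real X" "bound \<le> real X" "R + 1 \<le> real X" "\<delta> / 2 \<le> real X"
  unfolding X_def using bound_nonneg \<delta> by linarith+

lemma F_0: "t \<in> {0..1} \<Longrightarrow> F t 0 = 0"
  using F_le_near_0[of t 0] F_nonneg[of t 0] \<delta> by simp

lemma continuous_on_F_compose:
  assumes "continuous_on S f" "continuous_on S g" "\<And>p. p \<in> S \<Longrightarrow> f p \<in> {0..1}" "\<And>p. p \<in> S \<Longrightarrow> 0 \<le> g p"
  shows "continuous_on S (\<lambda>p. F (f p) (g p))"
proof -
  have "continuous_on S ((\<lambda>(t,x). F t x) \<circ> (\<lambda>p. (f p, g p)))"
    by (rule continuous_on_compose) (auto intro!: continuous_intros assms continuous_on_subset[OF F_cont])
  then show ?thesis by (simp add: o_def)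
qed

definition Fmax :: real where "Fmax = Sup ((\<lambda>(t,x). F t x) ` ({0..1} \<times> {0..real X}))"

lemma F_le_Fmax: "t \<in> {0..1} \<Longrightarrow> 0 \<le> x \<Longrightarrow> x \<le> real X \<Longrightarrow> F t x \<le> Fmax"
  and Fmax_nonneg: "0 \<le> Fmax"
proof -
  have "bdd_above ((\<lambda>(t,x). F t x) ` ({0..1} \<times> {0..real X}))"
    by (intro bounded_imp_bdd_above compact_imp_bounded compact_continuous_image
        continuous_on_subset[OF F_cont] compact_Times) auto
  then show le: "t \<in> {0..1} \<Longrightarrow> 0 \<le> x \<Longrightarrow> x \<le> real X \<Longrightarrow> F t x \<le> Fmax" for t x
    unfolding Fmax_def by (intro cSup_upper) force+
  show "0 \<le> Fmax" using le[of 0 0] F_0[of 0] by simp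
qed

definition interp :: "nat \<Rightarrow> real \<Rightarrow> real \<Rightarrow> real" where
  "interp n t x = (\<Sum>k=0..n * X. hat k (real n * x) * F t (real k / real n))"

definition approx :: "nat \<Rightarrow> real \<Rightarrow> real \<Rightarrow> real" where
  "approx n t x = interp n t (min x (real X)) + F t (real X) * (max x (real X) - real X) / real X"

lemma approx_eq_interp: "x \<le> real X \<Longrightarrow> approx n t x = interp n t x"
  unfolding approx_def by (simp add: min_def max_def)

lemma continuous_approx: "continuous_on ({0..1} \<times> UNIV) (\<lambda>(t,x). approx n t x)"
  unfolding approx_def interp_def case_prod_beta
  by (intro continuous_intros continuous_on_F_compose) (use X_bounds(1) in \<open>auto simp: mem_Times_iff\<close>)

lemma approx_nonneg: "t \<in> {0..1} \<Longrightarrow> 0 \<le> approx n t x"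
  unfolding approx_def interp_def using X_bounds(1)
  by (intro add_nonneg_nonneg sum_nonneg mult_nonneg_nonneg divide_nonneg_nonneg F_nonneg hat_nonneg) auto

lemma approx_lipschitz:
  assumes t: "t \<in> {0..1}"
  shows "\<bar>approx n t x - approx n t y\<bar> \<le> ((real (n * X) + 1) * Fmax * real n + Fmax / real X) * \<bar>x - y\<bar>"
proof -
  have "\<bar>min x (real X) - min y (real X)\<bar> \<le> \<bar>x - y\<bar>" by (auto simp: min_def abs_if)
  then have min: "\<bar>real n * min x (real X) - real n * min y (real X)\<bar> \<le> real n * \<bar>x - y\<bar>"
    by (simp add: abs_mult right_diff_distrib[symmetric] mult_left_mono)
  have "\<bar>interp n t (min x (real X)) - interp n t (min y (real X))\<bar>
      \<le> (real (n * X) + 1) * Fmax * \<bar>real n * min x (real X) - real n * min y (real X)\<bar>"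
    unfolding interp_def
    by (rule sum_hat_lipschitz) (use t F_nonneg F_le_Fmax grid_point_le in force)
  also have "\<dots> \<le> (real (n * X) + 1) * Fmax * (real n * \<bar>x - y\<bar>)"
    using min Fmax_nonneg by (intro mult_left_mono) auto
  finally have interp: "\<bar>interp n t (min x (real X)) - interp n t (min y (real X))\<bar>
      \<le> (real (n * X) + 1) * Fmax * real n * \<bar>x - y\<bar>" by (simp add: mult.assoc)
  have "\<bar>F t (real X) * (max x (real X) - real X) / real X - F t (real X) * (max y (real X) - real X) / real X\<bar>
      = F t (real X) * \<bar>max x (real X) - max y (real X)\<bar> / real X"
    using X_bounds(1) F_nonneg[OF t, of "real X"]
    by (simp add: abs_mult diff_divide_distrib[symmetric] right_diff_distrib[symmetric] abs_divide)
  also have "\<dots> \<le> Fmax * \<bar>x - y\<bar> / real X"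
    using F_nonneg[OF t, of "real X"] F_le_Fmax[OF t, of "real X"] X_bounds(1)
    by (intro divide_right_mono mult_mono) (auto simp: max_def abs_if)
  finally have "\<bar>approx n t x - approx n t y\<bar>
      \<le> (real (n * X) + 1) * Fmax * real n * \<bar>x - y\<bar> + Fmax * \<bar>x - y\<bar> / real X"
    using interp unfolding approx_def by linarith
  then show ?thesis by (simp add: algebra_simps)
qed

lemma approx_le_near_0:
  assumes n: "1 \<le> real n * (\<delta> / 2)" and t: "t \<in> {0..1}" and x: "0 \<le> x" "x \<le> \<delta> / 2"
  shows "approx n t x \<le> \<alpha> * m t * x"
proof -
  have n0: "0 < n" using n by (cases n) auto
  have "approx n t x = (\<Sum>k=0..n * X. hat k (real n * x) * F t (real k / real n))"
    using approx_eq_interp[of x n t] x X_bounds(4) unfolding interp_def by simp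
  also have "\<dots> \<le> (\<Sum>k=0..n * X. hat k (real n * x) * (0 + (\<alpha> * m t / real n) * real k))"
  proof (rule sum_hat_mono)
    fix k assume "hat k (real n * x) \<noteq> 0"
    from grid_point_near[OF this n0] have "real k / real n < x + 1 / real n" by linarith
    moreover have "1 / real n \<le> \<delta> / 2" using n n0 by (simp add: field_simps)
    ultimately have "real k / real n < \<delta>" using x by linarith
    then show "F t (real k / real n) \<le> 0 + \<alpha> * m t / real n * real k"
      using F_le_near_0[OF t, of "real k / real n"] by simp
  qed
  also have "\<dots> = \<alpha> * m t * x"
    using sum_hat_affine[of "real n * x" "n * X" 0 "\<alpha> * m t / real n"] x X_bounds(4) n0
    by (simp add: mult_left_mono)
  finally show ?thesis .
qed

lemma approx_ge:
  assumes n: "1 \<le> n" and t: "t \<in> {0..1}" and x: "0 \<le> x"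
  shows "\<beta> * m t * (x - (R + 1)) \<le> approx n t x"
proof -
  have \<beta>m: "0 \<le> \<beta> * m t" using \<beta> lam1_pos m_nonneg[OF t] by simp
  have n0: "0 < real n" using n by simp
  consider "x \<le> R + 1" | "R + 1 < x" "x \<le> real X" | "real X < x" by linarith
  then show ?thesis
  proof cases
    case 1
    then show ?thesis using \<beta>m approx_nonneg[OF t] by (smt (verit) mult_nonneg_nonpos)
  next
    case 2
    have "\<beta> * m t * x = (\<Sum>k=0..n * X. hat k (real n * x) * (0 + (\<beta> * m t / real n) * real k))"
      using sum_hat_affine[of "real n * x" "n * X" 0 "\<beta> * m t / real n"] x 2 n0
      by (simp add: mult_left_mono)
    also have "\<dots> \<le> (\<Sum>k=0..n * X. hat k (real n * x) * F t (real k / real n))"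
    proof (rule sum_hat_mono)
      fix k assume "hat k (real n * x) \<noteq> 0"
      from grid_point_near[OF this] n have "x - 1 / real n < real k / real n" by force
      moreover have "1 / real n \<le> 1" using n by simp
      ultimately have "R \<le> real k / real n" using 2 by linarith
      from F_ge_far[OF t this] show "0 + \<beta> * m t / real n * real k \<le> F t (real k / real n)" by simp
    qed
    also have "\<dots> = approx n t x" using approx_eq_interp[of x n t] 2 unfolding interp_def by simp
    finally have "\<beta> * m t * x \<le> approx n t x" .
    moreover have "\<beta> * m t * (x - (R + 1)) \<le> \<beta> * m t * x" using \<beta>m \<delta> by (intro mult_left_mono) auto
    ultimately show ?thesis by linarith
  next
    case 3
    have "interp n t (real X) = F t (real X)"
      using sum_hat_at_grid[of "n * X" "n * X" "\<lambda>k. F t (real k / real n)"] n0 unfolding interp_def by simp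
    then have "approx n t x = F t (real X) * x / real X" unfolding approx_def using 3 X_bounds(1)
      by (simp add: field_simps)
    moreover have "\<beta> * m t * real X * x / real X \<le> F t (real X) * x / real X"
      using F_ge_far[OF t, of "real X"] x X_bounds(1,3) \<delta> by (intro divide_right_mono mult_right_mono) auto
    moreover have "\<beta> * m t * real X * x / real X = \<beta> * m t * x" using X_bounds(1) by simp
    moreover have "\<beta> * m t * (x - (R + 1)) \<le> \<beta> * m t * x" using \<beta>m \<delta> by (intro mult_left_mono) auto
    ultimately show ?thesis by linarith
  qed
qed

lemma approx_le_Fmax:
  assumes t: "t \<in> {0..1}" and x: "0 \<le> x" "x \<le> real X"
  shows "approx n t x \<le> Fmax"
proof -
  have "approx n t x = (\<Sum>k=0..n * X. hat k (real n * x) * F t (real k / real n))"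
    using approx_eq_interp[of x n t] x unfolding interp_def by simp
  also have "\<dots> \<le> (\<Sum>k=0..n * X. hat k (real n * x) * (Fmax + 0 * real k))"
    by (rule sum_hat_mono) (use F_le_Fmax[OF t] grid_point_le in auto)
  also have "\<dots> = Fmax"
    using sum_hat_affine[of "real n * x" "n * X" Fmax 0] x by (simp add: mult_left_mono)
  finally show ?thesis .
qed

lemma shooting_approx:
  assumes n: "1 \<le> real n * (\<delta> / 2)"
  shows "shooting m (approx n) ((real (n * X) + 1) * Fmax * real n + Fmax / real X) \<alpha> \<beta> (\<delta> / 2) (R + 1) Fmax"
proof unfold_locales
  have "0 < n" using n by (cases n) auto
  then show "\<And>t x. t \<in> {0..1} \<Longrightarrow> 0 \<le> x \<Longrightarrow> x \<le> \<delta> / 2 \<Longrightarrow> approx n t x \<le> \<alpha> * m t * x"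
    "\<And>t x. t \<in> {0..1} \<Longrightarrow> 0 \<le> x \<Longrightarrow> \<beta> * m t * (x - (R + 1)) \<le> approx n t x"
    using approx_le_near_0[OF n] approx_ge by auto
  show "\<And>t x. t \<in> {0..1} \<Longrightarrow> 0 \<le> x \<Longrightarrow> x \<le> apriori_bound \<beta> (R + 1) \<Longrightarrow> approx n t x \<le> Fmax"
    using approx_le_Fmax X_bounds(2) unfolding bound_def by fastforce
qed (use continuous_approx approx_lipschitz approx_nonneg Fmax_nonneg X_bounds(1) \<alpha> \<beta> \<delta> in auto)

lemma approx_converges:
  assumes e: "0 < e"
  obtains d N where "0 < d"
    "\<And>n t x y. N \<le> n \<Longrightarrow> t \<in> {0..1} \<Longrightarrow> x \<in> {0..bound} \<Longrightarrow> y \<in> {0..bound} \<Longrightarrow> \<bar>x - y\<bar> < d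
      \<Longrightarrow> \<bar>approx n t x - F t y\<bar> \<le> e"
proof -
  have "uniformly_continuous_on ({0..1} \<times> {0..real X}) (\<lambda>(t,x). F t x)"
    by (intro compact_uniformly_continuous continuous_on_subset[OF F_cont] compact_Times) auto
  then obtain d where d0: "0 < d" and d: "\<And>p p'. p \<in> {0..1} \<times> {0..real X} \<Longrightarrow> p' \<in> {0..1} \<times> {0..real X}
      \<Longrightarrow> dist p' p < d \<Longrightarrow> dist ((\<lambda>(t,x). F t x) p') ((\<lambda>(t,x). F t x) p) < e"
    unfolding uniformly_continuous_on_def using e by metis
  have F_close: "\<bar>F t a - F t b\<bar> < e"
    if "t \<in> {0..1}" "a \<in> {0..real X}" "b \<in> {0..real X}" "\<bar>a - b\<bar> < d" for t a b
    using d[of "(t, b)" "(t, a)"] that by (simp add: dist_Pair_Pair dist_real_def)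
  define N where "N = nat \<lceil>2 / d\<rceil> + 1"
  have "\<bar>approx n t x - F t y\<bar> \<le> e"
    if n: "N \<le> n" and t: "t \<in> {0..1}" and x: "x \<in> {0..bound}" and y: "y \<in> {0..bound}"
      and xy: "\<bar>x - y\<bar> < d / 2" for n t x y
  proof -
    have n_big: "2 / d < real n" using n real_nat_ceiling_ge[of "2 / d"] unfolding N_def by linarith
    moreover have "0 < 2 / d" using d0 by simp
    ultimately have "0 < real n" by linarith
    then have n0: "0 < n" "1 / real n < d / 2" using n_big d0 by (auto simp: field_simps)
    have "approx n t x = (\<Sum>k=0..n * X. hat k (real n * x) * F t (real k / real n))"
      using approx_eq_interp[of x n t] x X_bounds(2) unfolding interp_def by simp
    moreover have "\<bar>(\<Sum>k=0..n * X. hat k (real n * x) * F t (real k / real n)) - F t y\<bar> \<le> e"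
    proof (rule sum_hat_close)
      fix k assume k: "k \<le> n * X" "hat k (real n * x) \<noteq> 0"
      have "\<bar>real k / real n - x\<bar> < 1 / real n" using grid_point_near[OF k(2) n0(1)] .
      then have "\<bar>real k / real n - y\<bar> < d" using n0(2) xy by linarith
      moreover have "real k / real n \<in> {0..real X}" using grid_point_le[OF k(1)] by simp
      ultimately show "\<bar>F t (real k / real n) - F t y\<bar> \<le> e"
        using F_close[OF t, of "real k / real n" y] y X_bounds(2) by auto
    qed (use x X_bounds(2) n0 in \<open>auto intro: mult_left_mono\<close>)
    ultimately show ?thesis by simp
  qed
  then show ?thesis using that[of "d / 2" N] d0 by auto
qed

lemma approx_solutions:
  assumes N: "1 \<le> real N * (\<delta> / 2)"
  obtains u s where
    "\<And>j. ivp_solution (approx (j + N)) (s j) (u j)" "\<And>j. u j 1 = 0"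
    "\<And>j t. t \<in> {0..1} \<Longrightarrow> 0 \<le> u j t \<and> u j t \<le> bound" "\<And>j. \<exists>t\<in>{0..1}. \<delta> / 2 < u j t"
    "\<And>j. 0 \<le> s j \<and> s j \<le> 2 * bound + Fmax / 2 + 1"
    "\<And>j t1 t2. t1 \<in> {0..1} \<Longrightarrow> t2 \<in> {0..1} \<Longrightarrow>
       \<bar>u j t1 - u j t2\<bar> \<le> (2 * bound + Fmax / 2 + 1 + Fmax) * \<bar>t1 - t2\<bar>"
proof -
  have "\<exists>u s. ivp_solution (approx (j + N)) s u \<and> u 1 = 0
      \<and> (\<forall>t\<in>{0..1}. 0 \<le> u t \<and> u t \<le> bound) \<and> (\<exists>t\<in>{0..1}. \<delta> / 2 < u t)
      \<and> 0 \<le> s \<and> s \<le> 2 * bound + Fmax / 2 + 1" for j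
  proof -
    have "real N * (\<delta> / 2) \<le> real (j + N) * (\<delta> / 2)" using \<delta> by (intro mult_right_mono) auto
    then have "1 \<le> real (j + N) * (\<delta> / 2)" using N by linarith
    then interpret S: shooting m "approx (j + N)" "(real ((j + N) * X) + 1) * Fmax * real (j + N) + Fmax / real X"
        \<alpha> \<beta> "\<delta> / 2" "R + 1" Fmax
      by (rule shooting_approx)
    obtain s where "\<delta> / 2 \<le> s" "s \<le> 2 * bound + Fmax / 2 + 1" "S.U s 1 = 0"
      "\<And>t. t \<in> {0..1} \<Longrightarrow> 0 \<le> S.U s t \<and> S.U s t \<le> bound" "\<exists>t\<in>{0..1}. \<delta> / 2 < S.U s t"
      using S.shooting_solution_exists unfolding bound_def by metis
    then show ?thesis using S.ivp_solution_U \<delta> by (intro exI[of _ "S.U s"] exI[of _ s]) auto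
  qed
  then obtain u s where us: "\<And>j. ivp_solution (approx (j + N)) (s j) (u j) \<and> u j 1 = 0
      \<and> (\<forall>t\<in>{0..1}. 0 \<le> u j t \<and> u j t \<le> bound) \<and> (\<exists>t\<in>{0..1}. \<delta> / 2 < u j t)
      \<and> 0 \<le> s j \<and> s j \<le> 2 * bound + Fmax / 2 + 1"
    by metis
  show ?thesis
  proof (rule that[of s u])
    fix j :: nat and t1 t2 :: real assume "t1 \<in> {0..1}" "t2 \<in> {0..1}"
    have "0 \<le> approx (j + N) t (u j t) \<and> approx (j + N) t (u j t) \<le> Fmax" if "t \<in> {0..1}" for t
    proof -
      have "0 \<le> u j t" "u j t \<le> bound" using us[of j] that by auto
      then show ?thesis using X_bounds(2) approx_nonneg[OF that] approx_le_Fmax[OF that, of "u j t"] by simp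
    qed
    then show "\<bar>u j t1 - u j t2\<bar> \<le> (2 * bound + Fmax / 2 + 1 + Fmax) * \<bar>t1 - t2\<bar>"
      using us[of j] \<open>t1 \<in> {0..1}\<close> \<open>t2 \<in> {0..1}\<close>
      by (intro ivp_solution_lipschitz[OF continuous_approx]) auto
  qed (use us in auto)
qed

lemma approx_along_uniform_limit:
  assumes u: "\<And>j t. t \<in> {0..1} \<Longrightarrow> 0 \<le> u j t \<and> u j t \<le> bound"
    and w: "\<And>t. t \<in> {0..1} \<Longrightarrow> 0 \<le> w t \<and> w t \<le> bound"
    and conv: "\<And>e. 0 < e \<Longrightarrow> \<exists>M. \<forall>j\<ge>M. \<forall>t\<in>{0..1}. \<bar>u j t - w t\<bar> < e"
    and n: "\<And>j. j \<le> n j" and e: "0 < e"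
  shows "\<exists>J. \<forall>j\<ge>J. \<forall>\<tau>\<in>{0..1}. \<bar>approx (n j) \<tau> (u j \<tau>) - F \<tau> (w \<tau>)\<bar> \<le> e"
proof -
  obtain d N where d: "0 < d" "\<And>n t x y. N \<le> n \<Longrightarrow> t \<in> {0..1} \<Longrightarrow> x \<in> {0..bound} \<Longrightarrow>
      y \<in> {0..bound} \<Longrightarrow> \<bar>x - y\<bar> < d \<Longrightarrow> \<bar>approx n t x - F t y\<bar> \<le> e"
    using approx_converges[OF e] by blast
  obtain M where M: "\<And>j t. M \<le> j \<Longrightarrow> t \<in> {0..1} \<Longrightarrow> \<bar>u j t - w t\<bar> < d"
    using conv[OF d(1)] by blast
  have "\<bar>approx (n j) \<tau> (u j \<tau>) - F \<tau> (w \<tau>)\<bar> \<le> e" if "max M N \<le> j" "\<tau> \<in> {0..1}" for j \<tau>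
    using that n[of j] u[of \<tau> j] w[of \<tau>] by (intro d(2) M) auto
  then show ?thesis by blast
qed

lemma limit_solution:
  obtains w where "ivp_solution (\<lambda>t _. F t (w t)) (repeated_integral (\<lambda>t. F t (w t)) 1) w" "w 1 = 0"
    "\<And>t. t \<in> {0..1} \<Longrightarrow> 0 \<le> w t" "\<exists>t\<in>{0..1}. 0 < w t"
proof -
  define N where "N = nat \<lceil>2 / \<delta>\<rceil> + 1"
  have "2 / \<delta> \<le> real N" unfolding N_def by linarith
  then have N: "1 \<le> real N * (\<delta> / 2)" using \<delta> by (simp add: field_simps)
  obtain u s where u: "\<And>j. ivp_solution (approx (j + N)) (s j) (u j)" "\<And>j. u j 1 = 0"
    "\<And>j t. t \<in> {0..1} \<Longrightarrow> 0 \<le> u j t \<and> u j t \<le> bound" "\<And>j. \<exists>t\<in>{0..1}. \<delta> / 2 < u j t"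
    and lip: "\<And>j t1 t2. t1 \<in> {0..1} \<Longrightarrow> t2 \<in> {0..1} \<Longrightarrow>
       \<bar>u j t1 - u j t2\<bar> \<le> (2 * bound + Fmax / 2 + 1 + Fmax) * \<bar>t1 - t2\<bar>"
    using approx_solutions[OF N] by metis
  obtain w k where w: "continuous_on {0..1} w" "strict_mono (k :: nat \<Rightarrow> nat)"
    and conv: "\<And>e. 0 < e \<Longrightarrow> \<exists>M. \<forall>n\<ge>M. \<forall>t\<in>{0..1}. \<bar>u (k n) t - w t\<bar> < e"
    using uniformly_convergent_subsequence_01[of u bound, OF _ lip] u(3) by (metis abs_of_nonneg)
  have lim: "(\<lambda>j. u (k j) t) \<longlonglongrightarrow> w t" if "t \<in> {0..1}" for t
  proof (rule LIMSEQ_I)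
    fix r :: real assume "0 < r"
    then show "\<exists>M. \<forall>n\<ge>M. norm (u (k n) t - w t) < r" using conv that by fastforce
  qed
  have w_range: "0 \<le> w t" "w t \<le> bound" if "t \<in> {0..1}" for t
    using LIMSEQ_le_const[OF lim[OF that]] LIMSEQ_le_const2[OF lim[OF that]] u(3)[OF that] by blast+
  define g where "g j \<tau> = approx (k j + N) \<tau> (u (k j) \<tau>)" for j \<tau>
  have g: "continuous_on {0..1} (g j)" for j
    unfolding g_def using ivp_solution_continuous_rhs[OF continuous_approx u(1)[of "k j"]] .
  have gw: "continuous_on {0..1} (\<lambda>\<tau>. F \<tau> (w \<tau>))"
    by (rule continuous_on_F_compose) (use w w_range in \<open>auto intro: continuous_on_id\<close>)
  have g_lim: "\<exists>J. \<forall>j\<ge>J. \<forall>\<tau>\<in>{0..1}. \<bar>g j \<tau> - F \<tau> (w \<tau>)\<bar> \<le> e" if "0 < e" for e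
    unfolding g_def using u(3) w_range trans_le_add1[OF seq_suble[OF w(2)]] conv \<open>0 < e\<close>
    by (intro approx_along_uniform_limit) auto
  have w_eq: "w t = repeated_integral (\<lambda>\<tau>. F \<tau> (w \<tau>)) 1 * t - repeated_integral (\<lambda>\<tau>. F \<tau> (w \<tau>)) t"
    if "t \<in> {0..1}" for t
  proof (rule dirichlet_solution_limit[OF g gw g_lim _ _ lim that])
    show "u (k j) t = s (k j) * t - repeated_integral (g j) t" if "t \<in> {0..1}" for j t
      using u(1)[of "k j"] that unfolding ivp_solution_def g_def by auto
  qed (use u(2) in auto)
  have "ivp_solution (\<lambda>t _. F t (w t)) (repeated_integral (\<lambda>t. F t (w t)) 1) w"
    unfolding ivp_solution_def using w(1) w_eq by simp
  moreover have "w 1 = 0" using w_eq[of 1] by simp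
  moreover have "\<exists>t\<in>{0..1}. 0 < w t"
  proof -
    have "0 < \<delta> / 2" using \<delta> by simp
    from conv[OF this] obtain M where M: "\<And>n t. M \<le> n \<Longrightarrow> t \<in> {0..1} \<Longrightarrow> \<bar>u (k n) t - w t\<bar> < \<delta> / 2"
      by blast
    obtain t where "t \<in> {0..1}" "\<delta> / 2 < u (k M) t" using u(4) by blast
    moreover from this(1) have "\<bar>u (k M) t - w t\<bar> < \<delta> / 2" using M[of M t] by simp
    ultimately have "0 < w t" by linarith
    then show ?thesis using \<open>t \<in> {0..1}\<close> by blast
  qed
  ultimately show ?thesis using that w_range by blast
qed

theorem positive_solution_exists:
  "\<exists>u u' u''. continuous_on {0..1} u \<and> C2_on_open01 u u' u'' \<and> (\<forall>t\<in>{0<..<1}. u'' t + F t (u t) = 0)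
     \<and> u 0 = 0 \<and> u 1 = 0 \<and> (\<forall>t\<in>{0<..<1}. 0 < u t)"
proof -
  obtain w where w: "ivp_solution (\<lambda>t _. F t (w t)) (repeated_integral (\<lambda>t. F t (w t)) 1) w" "w 1 = 0"
    "\<And>t. t \<in> {0..1} \<Longrightarrow> 0 \<le> w t" "\<exists>t\<in>{0..1}. 0 < w t"
    using limit_solution by blast
  have wc: "continuous_on {0..1} w" using w(1) unfolding ivp_solution_def by blast
  have fst: "continuous_on ({0..1} \<times> (UNIV :: real set)) fst" by (intro continuous_intros)
  have "continuous_on ({0..1} \<times> (UNIV :: real set)) (\<lambda>p. F (fst p) (w (fst p)))"
  proof (rule continuous_on_F_compose)
    show "continuous_on ({0..1} \<times> (UNIV :: real set)) (\<lambda>p. w (fst p))"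
      by (rule continuous_on_compose2[OF wc fst]) auto
  qed (auto simp: mem_Times_iff intro: continuous_intros w(3))
  then have G: "continuous_on ({0..1} \<times> (UNIV :: real set)) (\<lambda>(t, x). F t (w t))"
    by (simp add: case_prod_beta)
  have G_nonneg: "\<And>t x :: real. t \<in> {0..1} \<Longrightarrow> 0 \<le> F t (w t)" using F_nonneg w(3) by blast
  obtain ts where ts: "ts \<in> {0..1}" "0 < w ts" using w(4) by blast
  show ?thesis
  proof (intro exI conjI)
    show "continuous_on {0..1} w" by (rule wc)
    show "C2_on_open01 w (ivp_slope (\<lambda>t _. F t (w t)) (repeated_integral (\<lambda>t. F t (w t)) 1) w)
        (\<lambda>t. - F t (w t))"
      using ivp_solution_C2[OF G w(1)] .
    show "\<forall>t\<in>{0<..<1}. 0 < w t"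
      using ivp_solution_pos_inside[OF G G_nonneg w(1,2) ts] by auto
  qed (auto simp: w(2) ivp_solution_0[OF w(1)])
qed

end

section \<open>The annulus problem\<close>

lemma annulus_coefficients_2:
  assumes r: "0 < r1" "r1 < r2"
  shows "continuous_on {0..1} (radius_of 2 r1 r2)" "\<And>t. t \<in> {0..1} \<Longrightarrow> radius_of 2 r1 r2 t \<in> {r1..r2}"
    "continuous_on {0..1} (qfun 2 r1 r2)" "\<And>t. t \<in> {0..1} \<Longrightarrow> 0 < qfun 2 r1 r2 t"
proof -
  define a where "a = r1 / r2"
  have a: "0 < a" "a < 1" "r2 * a = r1" unfolding a_def using r by auto
  have rad: "radius_of 2 r1 r2 = (\<lambda>t. r2 * a powr t)" unfolding radius_of_def a_def by auto
  have q: "qfun 2 r1 r2 = (\<lambda>t. (r2 * a powr t * ln (r2 / r1))\<^sup>2)" unfolding qfun_def a_def by auto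
  show "continuous_on {0..1} (radius_of 2 r1 r2)" "continuous_on {0..1} (qfun 2 r1 r2)"
    unfolding rad q using a by (auto intro!: continuous_intros)
  fix t :: real assume t: "t \<in> {0..1}"
  have "a powr t \<le> a powr 0" by (rule powr_mono') (use t a in auto)
  moreover have "a powr 1 \<le> a powr t" by (rule powr_mono') (use t a in auto)
  ultimately have "r2 * a \<le> r2 * a powr t" "r2 * a powr t \<le> r2 * 1" using a r by (auto intro: mult_left_mono)
  then show "radius_of 2 r1 r2 t \<in> {r1..r2}" unfolding rad using a by simp
  show "0 < qfun 2 r1 r2 t" unfolding q using a r by simp
qed

lemma powr_inverse_of_power: "0 < x \<Longrightarrow> 0 < k \<Longrightarrow> (x ^ k) powr (1 / real k) = (x :: real)"
  by (simp add: powr_realpow[symmetric] powr_powr)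

lemma annulus_coefficients_ge_3:
  assumes r: "0 < r1" "r1 < r2" and N: "3 \<le> N"
  shows "continuous_on {0..1} (radius_of N r1 r2)" "\<And>t. t \<in> {0..1} \<Longrightarrow> radius_of N r1 r2 t \<in> {r1..r2}"
    "continuous_on {0..1} (qfun N r1 r2)" "\<And>t. t \<in> {0..1} \<Longrightarrow> 0 < qfun N r1 r2 t"
proof -
  define k where "k = N - 2"
  have k: "0 < k" "N \<noteq> 2" unfolding k_def using N by auto
  define D where "D = r2 ^ k - r1 ^ k"
  have D: "0 < D" unfolding D_def using r k by (simp add: power_strict_mono)
  define A where "A = (r1 * r2) ^ k / D"
  define B where "B = r2 ^ k / D"
  have A: "0 < A" unfolding A_def using D r by simp
  have B1: "B - 1 = r1 ^ k / D" unfolding B_def D_def using D unfolding D_def by (simp add: field_simps)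
  have Bt: "0 < B - t" if "t \<in> {0..1}" for t using B1 D r that by (smt (verit) divide_pos_pos zero_less_power atLeastAtMost_iff)
  have rad: "radius_of N r1 r2 = (\<lambda>t. (A / (B - t)) powr (1 / real k))"
    unfolding radius_of_def A_def B_def D_def k_def using k by (auto simp: Let_def)
  have q: "qfun N r1 r2 = (\<lambda>t. (real k) powr (-2) * A powr (2 / real k) / (B - t) powr (2 * real (N - 1) / real k))"
    unfolding qfun_def A_def B_def D_def k_def using k by (auto simp: Let_def)
  show "continuous_on {0..1} (radius_of N r1 r2)" "continuous_on {0..1} (qfun N r1 r2)"
    unfolding rad q using A Bt by (auto intro!: continuous_intros dest: Bt)
  fix t :: real assume t: "t \<in> {0..1}"
  have "0 < B - 1" using B1 D r by simp
  then have "A / B \<le> A / (B - t)" "A / (B - t) \<le> A / (B - 1)"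
    using A Bt[OF t] t by (auto intro!: divide_left_mono)
  moreover have "A / B = r1 ^ k" unfolding A_def B_def using D r by (simp add: power_mult_distrib)
  moreover have "A / (B - 1) = r2 ^ k" unfolding B1 A_def using D r by (simp add: power_mult_distrib)
  ultimately have "(r1 ^ k) powr (1 / real k) \<le> (A / (B - t)) powr (1 / real k)"
    "(A / (B - t)) powr (1 / real k) \<le> (r2 ^ k) powr (1 / real k)"
    using r A Bt[OF t] by (auto intro!: powr_mono2)
  then show "radius_of N r1 r2 t \<in> {r1..r2}" unfolding rad using powr_inverse_of_power k r by simp
  show "0 < qfun N r1 r2 t" unfolding q using A Bt[OF t] k by simp
qed

lemma annulus_coefficients:
  assumes "0 < r1" "r1 < r2" "2 \<le> N"
  shows "continuous_on {0..1} (radius_of N r1 r2)" "\<And>t. t \<in> {0..1} \<Longrightarrow> radius_of N r1 r2 t \<in> {r1..r2}"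
    "continuous_on {0..1} (qfun N r1 r2)" "\<And>t. t \<in> {0..1} \<Longrightarrow> 0 < qfun N r1 r2 t"
  using annulus_coefficients_2[OF assms(1,2)] annulus_coefficients_ge_3[OF assms(1,2)] assms(3)
  by (cases "N = 2"; force)+

lemma continuous_on_ffun:
  assumes r: "0 < r1" "r1 < r2" "2 \<le> N" and h: "continuous_on ({r1..r2} \<times> {0..}) (\<lambda>(t, u). h t u)"
  shows "continuous_on ({0..1} \<times> {0..}) (\<lambda>(t, x). ffun N r1 r2 h t x)"
proof -
  note coeff = annulus_coefficients[OF r]
  have "continuous_on ({0..1} \<times> {0..}) ((\<lambda>(t, u). h t u) \<circ> (\<lambda>p. (radius_of N r1 r2 (fst p), snd p)))"
    by (rule continuous_on_compose)
      (auto intro!: continuous_intros continuous_on_compose2[OF coeff(1)] continuous_on_subset[OF h]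
        dest: coeff(2))
  then show ?thesis unfolding ffun_def by (simp add: o_def case_prod_beta)
qed

lemma weight_annulus:
  assumes r: "0 < r1" "r1 < r2" "2 \<le> N"
    and b: "continuous_on {0..1} b" "\<forall>t\<in>{0..1}. b t \<ge> 0" "\<exists>t\<in>{0..1}. b t \<noteq> 0"
  shows "weight (\<lambda>t. qfun N r1 r2 t * b t)"
proof
  note coeff = annulus_coefficients[OF r]
  show "continuous_on {0..1} (\<lambda>t. qfun N r1 r2 t * b t)" by (intro continuous_intros coeff(3) b(1))
  show "\<And>t. t \<in> {0..1} \<Longrightarrow> 0 \<le> qfun N r1 r2 t * b t" using coeff(4) b(2) by (simp add: less_imp_le)
  show "\<exists>t\<in>{0..1}. 0 < qfun N r1 r2 t * b t" using coeff(4) b(2,3) by (metis less_le mult_pos_pos)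
qed

text \<open>Hypotheses (i) and (ii) of the theorem are stated for t in the open interval only; continuity
  extends them to [0,1], and \<open>h t 0 = 0\<close> covers u = 0 in (i).\<close>
lemma ffun_bounds_on_01:
  assumes r: "0 < r1" "r1 < r2" and N: "N \<ge> 2"
    and h_cont: "continuous_on ({r1..r2} \<times> {0..}) (\<lambda>(t, u). h t u)"
    and h_zero: "\<forall>t\<in>{r1..r2}. h t 0 = 0" and b_cont: "continuous_on {0..1} b" and \<delta>: "0 < \<delta>" "\<delta> < R"
    and hyp_i: "\<forall>t\<in>{0<..<1}. \<forall>u\<in>{0<..<\<delta>}. ffun N r1 r2 h t u \<le> b t * u"
    and hyp_ii: "\<forall>t\<in>{0<..<1}. \<forall>u\<ge>R. ffun N r1 r2 h t u \<ge> c * b t * u"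
    and t: "t \<in> {0..1}"
  shows "0 \<le> x \<Longrightarrow> x < \<delta> \<Longrightarrow> ffun N r1 r2 h t x \<le> b t * x"
    and "R \<le> x \<Longrightarrow> c * b t * x \<le> ffun N r1 r2 h t x"
proof -
  have f_cont: "continuous_on {0..1} (\<lambda>t. ffun N r1 r2 h t x)" if "0 \<le> x" for x
  proof (rule continuous_on_compose2[OF continuous_on_ffun[OF r N h_cont], of "{0..1}" "\<lambda>t. (t, x)", simplified])
    show "continuous_on {0..1} (\<lambda>t. (t, x))" by (intro continuous_intros)
  qed (use that in auto)
  show "ffun N r1 r2 h t x \<le> b t * x" if x: "0 \<le> x" "x < \<delta>"
  proof (cases "x = 0")
    case True
    then show ?thesis using h_zero annulus_coefficients(2)[OF r N t] unfolding ffun_def by simp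
  next
    case False
    have "0 \<le> b t * x - ffun N r1 r2 h t x"
      by (rule ge_on_01_if_ge_on_open_01[OF _ _ t])
        (use x False hyp_i in \<open>auto intro!: continuous_intros b_cont f_cont\<close>)
    then show ?thesis by simp
  qed
  show "c * b t * x \<le> ffun N r1 r2 h t x" if x: "R \<le> x"
  proof -
    have "0 \<le> ffun N r1 r2 h t x - c * b t * x"
      by (rule ge_on_01_if_ge_on_open_01[OF _ _ t])
        (use x \<delta> hyp_ii in \<open>auto intro!: continuous_intros b_cont f_cont\<close>)
    then show ?thesis by simp
  qed
qed

lemma annulus_crossing:
  assumes r: "0 < r1" "r1 < r2" and N: "N \<ge> 2"
    and h_cont: "continuous_on ({r1..r2} \<times> {0..}) (\<lambda>(t, u). h t u)"
    and h_nonneg: "\<forall>t\<in>{r1..r2}. \<forall>u\<ge>0. h t u \<ge> 0"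
    and h_zero: "\<forall>t\<in>{r1..r2}. h t 0 = 0"
    and b_cont: "continuous_on {0..1} b" and b_nonneg: "\<forall>t\<in>{0..1}. b t \<ge> 0"
    and b_nz: "\<exists>t\<in>{0..1}. b t \<noteq> 0"
    and c: "c > 1" and \<delta>: "0 < \<delta>" "\<delta> < R"
    and hyp_i: "\<forall>t\<in>{0<..<1}. \<forall>u\<in>{0<..<\<delta>}. ffun N r1 r2 h t u \<le> b t * u"
    and hyp_ii: "\<forall>t\<in>{0<..<1}. \<forall>u\<ge>R. ffun N r1 r2 h t u \<ge> c * b t * u"
    and lam: "lambda1 (\<lambda>t. qfun N r1 r2 t * b t) / c < lam" "lam < lambda1 (\<lambda>t. qfun N r1 r2 t * b t)"
  shows "crossing (\<lambda>t. qfun N r1 r2 t * b t) (\<lambda>t x. lam * qfun N r1 r2 t * ffun N r1 r2 h t x) lam (c * lam) \<delta> R"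
proof -
  interpret weight "\<lambda>t. qfun N r1 r2 t * b t" by (rule weight_annulus[OF r N b_cont b_nonneg b_nz])
  note coeff = annulus_coefficients[OF r N]
  note f_bounds = ffun_bounds_on_01[OF r N h_cont h_zero b_cont \<delta> hyp_i hyp_ii]
  have lam1: "lambda1 (\<lambda>t. qfun N r1 r2 t * b t) = lam1" by (rule lambda1_eq_lam1)
  have "0 < lam1 / c" using lam1_pos c by simp
  then have lam_pos: "0 < lam" using lam(1) unfolding lam1 by linarith
  show ?thesis
  proof unfold_locales
    show "continuous_on ({0..1} \<times> {0..}) (\<lambda>(t, x). lam * qfun N r1 r2 t * ffun N r1 r2 h t x)"
      using continuous_on_ffun[OF r N h_cont] unfolding case_prod_beta
      by (intro continuous_intros continuous_on_compose2[OF coeff(3)]) auto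
    fix t x :: real assume t: "t \<in> {0..1}"
    show "0 \<le> x \<Longrightarrow> 0 \<le> lam * qfun N r1 r2 t * ffun N r1 r2 h t x"
      using lam_pos coeff(4)[OF t] h_nonneg coeff(2)[OF t] unfolding ffun_def by simp
    show "0 \<le> x \<Longrightarrow> x < \<delta> \<Longrightarrow> lam * qfun N r1 r2 t * ffun N r1 r2 h t x \<le> lam * (qfun N r1 r2 t * b t) * x"
      using mult_left_mono[OF f_bounds(1)[OF t], of x "lam * qfun N r1 r2 t"] lam_pos coeff(4)[OF t]
      by (simp add: algebra_simps)
    show "R \<le> x \<Longrightarrow> c * lam * (qfun N r1 r2 t * b t) * x \<le> lam * qfun N r1 r2 t * ffun N r1 r2 h t x"
      using mult_left_mono[OF f_bounds(2)[OF t], of x "lam * qfun N r1 r2 t"] lam_pos coeff(4)[OF t]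
      by (simp add: algebra_simps)
  qed (use lam lam1 c \<delta> in \<open>auto simp: divide_less_eq mult.commute\<close>)
qed

theorem theorem1p5:
  fixes r1 r2 :: real and N :: nat and h :: "real \<Rightarrow> real \<Rightarrow> real"
    and b :: "real \<Rightarrow> real" and c \<delta> R lam :: real
  assumes r: "0 < r1" "r1 < r2" and N: "N \<ge> 2"
    and h_cont: "continuous_on ({r1..r2} \<times> {0..}) (\<lambda>(t, u). h t u)"
    and h_nonneg: "\<forall>t\<in>{r1..r2}. \<forall>u\<ge>0. h t u \<ge> 0"
    and h_zero: "\<forall>t\<in>{r1..r2}. h t 0 = 0"
    and b_cont: "continuous_on {0..1} b"
    and b_nonneg: "\<forall>t\<in>{0..1}. b t \<ge> 0"
    and b_nz: "\<exists>t\<in>{0..1}. b t \<noteq> 0"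
    and c: "c > 1" and \<delta>: "0 < \<delta>" "\<delta> < R"
    and hyp_i: "\<forall>t\<in>{0<..<1}. \<forall>u\<in>{0<..<\<delta>}. ffun N r1 r2 h t u \<le> b t * u"
    and hyp_ii: "\<forall>t\<in>{0<..<1}. \<forall>u\<ge>R. ffun N r1 r2 h t u \<ge> c * b t * u"
    and lam: "lambda1 (\<lambda>t. qfun N r1 r2 t * b t) / c < lam"
             "lam < lambda1 (\<lambda>t. qfun N r1 r2 t * b t)"
  shows "\<exists>u. positive_solution (qfun N r1 r2) (ffun N r1 r2 h) lam u"
proof -
  interpret crossing "\<lambda>t. qfun N r1 r2 t * b t" "\<lambda>t x. lam * qfun N r1 r2 t * ffun N r1 r2 h t x"
    lam "c * lam" \<delta> R
    by (rule annulus_crossing[OF assms])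
  show ?thesis
    using positive_solution_exists unfolding positive_solution_def by (auto simp: mult.assoc)
qed

end
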